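(* Let $\varepsilon>0$, $\theta_0>0$, $N=2K+1$, $h=L/N$, and assume the mobility satisfies $\mathcal{M}(x)\ge\mathcal{M}_0>0$ for $x\in[-1,1]$. Let $\Phi\in C^6_{\rm per}(\Omega)$ with $\|\Phi\|_{L^\infty}<1$, and set $\phi^0:=\mathcal{P}_h(\mathcal{P}_N\Phi)$. Let $(\phi^m,\mu^m)_{m\ge1}$ be generated by the scheme $$\frac{\phi^{m}-\phi^{m-1}}{\Delta t}=\nabla_h\cdot(\check{\mathcal{M}}^{m-1}\nabla_h\mu^{m}),\qquad \mu^{m}=\ln(1+\phi^{m})-\ln(1-\phi^{m})-\theta_0\phi^{m-1}-\varepsilon^2\Delta_h\phi^{m}.$$ Then $(\Phi,1)_{L^2}=\langle\phi^0,1\rangle$, and, for any $\Delta t>0$, $h>0$ and $m\in\mathbb{N}$, $$E_h(\phi^m)+\Delta t\,[\check{\mathcal{M}}^{m-1}\nabla_h\mu^m,\nabla_h\mu^m]\le E_h(\phi^{m-1}),$$ so that $E_h(\phi^m)\le E_h(\phi^0)\le C_6$ with $C_6>0$ independent of $h$. Consequently $$\|\nabla_h\phi^m\|_2\le\sqrt{2C_6+\theta_0|\Omega|}\,\varepsilon^{-1}=:C_7\quad\forall m\in\mathbb{N}.$$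
   Context: $\Omega=(0,L)^3$, periodic; $p_i=(i-\tfrac12)h$. $\mathcal{C}_{\rm per}$: real $N$-periodic grid functions on cell centers; $\langle\nu,\xi\rangle=h^3\sum_{i,j,k=1}^N\nu_{i,j,k}\xi_{i,j,k}$; $\|\nu\|_2^2=\langle\nu,\nu\rangle$. $\mathcal{P}_N$ is the Fourier projection of $C_{\rm per}(\Omega)$ onto $\Omega$-periodic trigonometric polynomials of degree at most $K$ in each variable; $\mathcal{P}_h$ is evaluation at cell centers $(p_i,p_j,p_k)$. Face differences $D_x\nu_{i+1/2,j,k}=(\nu_{i+1,j,k}-\nu_{i,j,k})/h$ (similarly $D_y,D_z$), and for face vector fields $[\vec f,\vec g]=h^3\sum_{i,j,k=1}^N(f^x_{i+1/2,j,k}g^x_{i+1/2,j,k}+f^y_{i,j+1/2,k}g^y_{i,j+1/2,k}+f^z_{i,j,k+1/2}g^z_{i,j,k+1/2})$; $\nabla_h\nu=(D_x\nu,D_y\nu,D_z\nu)$ and $\|\nabla_h\nu\|_2^2=[\nabla_h\nu,\nabla_h\nu]$. $\Delta_h$ is the standard 7-point discrete Laplacian. Face mobility $\check{\mathcal{M}}^{n}_{i+1/2,j,k}=\mathcal{M}(\tfrac12(\phi^n_{i+1,j,k}+\phi^n_{i,j,k}))$ etc., and $\nabla_h\cdot(\mathcal{D}\nabla_h\nu)=d_x(\mathcal{D}D_x\nu)+d_y(\mathcal{D}D_y\nu)+d_z(\mathcal{D}D_z\nu)$ with $d_x f_{i,j,k}=(f_{i+1/2,j,k}-f_{i-1/2,j,k})/h$.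 Discrete energy: $E_h(\phi)=\langle1+\phi,\ln(1+\phi)\rangle+\langle1-\phi,\ln(1-\phi)\rangle+\frac{\varepsilon^2}{2}\|\nabla_h\phi\|_2^2-\frac{\theta_0}{2}\|\phi\|_2^2$. *)

theory Defs
  imports "HOL-Analysis.Analysis"
begin

type_synonym pt3 = "real \<times> real \<times> real"
type_synonym grid = "int \<Rightarrow> int \<Rightarrow> int \<Rightarrow> real"

fun Ck :: "nat \<Rightarrow> ('a::euclidean_space \<Rightarrow> real) \<Rightarrow> bool" where
  "Ck 0 f = continuous_on UNIV f"
| "Ck (Suc k) f = (f differentiable_on UNIV \<and>
       (\<forall>b\<in>Basis. Ck k (\<lambda>x. frechet_derivative f (at x) b)))"

definition periodic3 :: "real \<Rightarrow> (pt3 \<Rightarrow> real) \<Rightarrow> bool" where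
  "periodic3 L f \<longleftrightarrow> (\<forall>x y z. f (x + L, y, z) = f (x, y, z) \<and>
      f (x, y + L, z) = f (x, y, z) \<and> f (x, y, z + L) = f (x, y, z))"

definition C6_per :: "real \<Rightarrow> (pt3 \<Rightarrow> real) \<Rightarrow> bool" where
  "C6_per L f \<longleftrightarrow> periodic3 L f \<and> Ck 6 f"

definition Omega :: "real \<Rightarrow> pt3 set" where
  "Omega L = cbox (0, 0, 0) (L, L, L)"

definition fourier_coeff :: "real \<Rightarrow> (pt3 \<Rightarrow> real) \<Rightarrow> int \<times> int \<times> int \<Rightarrow> complex" where
  "fourier_coeff L f k = (case k of (k1, k2, k3) \<Rightarrow>
      complex_of_real (1 / L ^ 3) *
      integral (Omega L) (\<lambda>(x, y, z). complex_of_real (f (x, y, z)) *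
         cis (- 2 * pi * (of_int k1 * x + of_int k2 * y + of_int k3 * z) / L)))"

text \<open>Fourier projection P_N onto trigonometric polynomials of degree at most K
  in each variable (the sum is real for real f; Re just fixes the type).\<close>
definition fourier_proj :: "real \<Rightarrow> nat \<Rightarrow> (pt3 \<Rightarrow> real) \<Rightarrow> pt3 \<Rightarrow> real" where
  "fourier_proj L K f = (\<lambda>(x, y, z). Re (\<Sum>k\<in>{-int K..int K} \<times> {-int K..int K} \<times> {-int K..int K}.
      fourier_coeff L f k *
      (case k of (k1, k2, k3) \<Rightarrow> cis (2 * pi * (of_int k1 * x + of_int k2 * y + of_int k3 * z) / L))))"

definition eval_grid :: "real \<Rightarrow> (pt3 \<Rightarrow> real) \<Rightarrow> grid" where
  "eval_grid h f = (\<lambda>i j k. f ((of_int i - 1/2) * h, (of_int j - 1/2) * h, (of_int k - 1/2) * h))"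

definition grid_periodic :: "nat \<Rightarrow> grid \<Rightarrow> bool" where
  "grid_periodic N f \<longleftrightarrow> (\<forall>i j k. f (i + int N) j k = f i j k \<and>
      f i (j + int N) k = f i j k \<and> f i j (k + int N) = f i j k)"

definition gsum :: "nat \<Rightarrow> (int \<Rightarrow> int \<Rightarrow> int \<Rightarrow> real) \<Rightarrow> real" where
  "gsum N F = (\<Sum>i\<in>{1..int N}. \<Sum>j\<in>{1..int N}. \<Sum>k\<in>{1..int N}. F i j k)"

definition ip :: "real \<Rightarrow> nat \<Rightarrow> grid \<Rightarrow> grid \<Rightarrow> real" where
  "ip h N f g = h ^ 3 * gsum N (\<lambda>i j k. f i j k * g i j k)"

text \<open>Face differences; the value indexed by i is the value at face i+1/2.\<close>
definition Dx :: "real \<Rightarrow> grid \<Rightarrow> grid" where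
  "Dx h f = (\<lambda>i j k. (f (i + 1) j k - f i j k) / h)"
definition Dy :: "real \<Rightarrow> grid \<Rightarrow> grid" where
  "Dy h f = (\<lambda>i j k. (f i (j + 1) k - f i j k) / h)"
definition Dz :: "real \<Rightarrow> grid \<Rightarrow> grid" where
  "Dz h f = (\<lambda>i j k. (f i j (k + 1) - f i j k) / h)"

definition grad_norm_sq :: "real \<Rightarrow> nat \<Rightarrow> grid \<Rightarrow> real" where
  "grad_norm_sq h N f = h ^ 3 * gsum N (\<lambda>i j k.
      (Dx h f i j k)\<^sup>2 + (Dy h f i j k)\<^sup>2 + (Dz h f i j k)\<^sup>2)"

definition lap :: "real \<Rightarrow> grid \<Rightarrow> grid" where
  "lap h f = (\<lambda>i j k.
      (f (i + 1) j k - 2 * f i j k + f (i - 1) j k) / h\<^sup>2 +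
      (f i (j + 1) k - 2 * f i j k + f i (j - 1) k) / h\<^sup>2 +
      (f i j (k + 1) - 2 * f i j k + f i j (k - 1)) / h\<^sup>2)"

text \<open>face mobilities M((phi_{i+1}+phi_i)/2), indexed by the lower cell\<close>
definition Mx :: "(real \<Rightarrow> real) \<Rightarrow> grid \<Rightarrow> grid" where
  "Mx M phi = (\<lambda>i j k. M ((phi (i + 1) j k + phi i j k) / 2))"
definition My :: "(real \<Rightarrow> real) \<Rightarrow> grid \<Rightarrow> grid" where
  "My M phi = (\<lambda>i j k. M ((phi i (j + 1) k + phi i j k) / 2))"
definition Mz :: "(real \<Rightarrow> real) \<Rightarrow> grid \<Rightarrow> grid" where
  "Mz M phi = (\<lambda>i j k. M ((phi i j (k + 1) + phi i j k) / 2))"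

definition div_mob :: "real \<Rightarrow> (real \<Rightarrow> real) \<Rightarrow> grid \<Rightarrow> grid \<Rightarrow> grid" where
  "div_mob h M phi mu = (\<lambda>i j k.
      (Mx M phi i j k * Dx h mu i j k - Mx M phi (i - 1) j k * Dx h mu (i - 1) j k) / h +
      (My M phi i j k * Dy h mu i j k - My M phi i (j - 1) k * Dy h mu i (j - 1) k) / h +
      (Mz M phi i j k * Dz h mu i j k - Mz M phi i j (k - 1) * Dz h mu i j (k - 1)) / h)"

definition mob_grad_sq :: "real \<Rightarrow> nat \<Rightarrow> (real \<Rightarrow> real) \<Rightarrow> grid \<Rightarrow> grid \<Rightarrow> real" where
  "mob_grad_sq h N M phi mu = h ^ 3 * gsum N (\<lambda>i j k.
      Mx M phi i j k * (Dx h mu i j k)\<^sup>2 + My M phi i j k * (Dy h mu i j k)\<^sup>2 +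
      Mz M phi i j k * (Dz h mu i j k)\<^sup>2)"

definition energy :: "real \<Rightarrow> real \<Rightarrow> real \<Rightarrow> nat \<Rightarrow> grid \<Rightarrow> real" where
  "energy eps theta0 h N phi =
      ip h N (\<lambda>i j k. 1 + phi i j k) (\<lambda>i j k. ln (1 + phi i j k)) +
      ip h N (\<lambda>i j k. 1 - phi i j k) (\<lambda>i j k. ln (1 - phi i j k)) +
      eps\<^sup>2 / 2 * grad_norm_sq h N phi - theta0 / 2 * ip h N phi phi"

end

theory Submission
  imports Defs
begin

(* Six integrations by parts give Fourier coefficients of Phi decaying like |k|^-6, so the
   projection P_N Phi and its difference quotients are bounded uniformly in K; together with
   |u ln u| <= u^2 + 1 this bounds E_h(phi^0) independently of h.  The mass identity holds because
   at the N = 2K+1 cell centres every nonzero mode of degree at most K sums to zero.  For the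
   scheme, the convex entropy and gradient terms are treated implicitly and the concave term
   -theta0 phi^2/2 explicitly, so tangent-line inequalities bound the energy change by
   <phi^m - phi^(m-1), mu^m>, which summation by parts turns into -dt [M grad mu, grad mu] <= 0.
   Since the entropy is nonnegative and phi^2 <= 1, the energy finally controls the gradient. *)

section \<open>Partial derivatives and integration by parts\<close>

definition dir_deriv :: "pt3 \<Rightarrow> (pt3 \<Rightarrow> real) \<Rightarrow> pt3 \<Rightarrow> real" where
  "dir_deriv b F = (\<lambda>x. frechet_derivative F (at x) b)"

lemma Ck_imp_continuous_on: "Ck k F \<Longrightarrow> continuous_on UNIV F"
  by (cases k) (auto intro: differentiable_imp_continuous_on)

lemma Ck_Suc_imp_Ck: "Ck (Suc k) F \<Longrightarrow> Ck k F"
  by (induction k arbitrary: F) (auto intro: differentiable_imp_continuous_on)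

lemma Ck_add_imp_Ck: "Ck (j + k) F \<Longrightarrow> Ck k F"
  by (induction j) (simp_all add: Ck_Suc_imp_Ck[of "_ + k"])

lemma Ck_Suc_dir_deriv: "Ck (Suc k) F \<Longrightarrow> b \<in> Basis \<Longrightarrow> Ck k (dir_deriv b F)"
  by (simp add: dir_deriv_def zero_prod_def)

lemma Ck_add_dir_deriv_iter: "Ck (j + k) F \<Longrightarrow> b \<in> Basis \<Longrightarrow> Ck k ((dir_deriv b ^^ j) F)"
proof (induction j arbitrary: F)
  case (Suc j)
  then have "Ck k ((dir_deriv b ^^ j) (dir_deriv b F))"
    using Ck_Suc_dir_deriv[of "j + k" F b] by simp
  then show ?case by (simp add: funpow_Suc_right del: funpow.simps)
qed simp

lemma frechet_derivative_translation_invariant: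
  fixes F :: "'a::real_normed_vector \<Rightarrow> 'b::real_normed_vector"
  assumes F: "F differentiable_on UNIV" and inv: "\<And>p. F (p + v) = F p"
  shows "frechet_derivative F (at (p + v)) = frechet_derivative F (at p)"
proof -
  have "(F has_derivative frechet_derivative F (at (p + v))) (at (p + v))"
    using F unfolding differentiable_on_def frechet_derivative_works by blast
  moreover have "((\<lambda>q. q + v) has_derivative (\<lambda>q. q)) (at p)"
    by (auto intro!: derivative_eq_intros)
  ultimately have "((\<lambda>q. F (q + v)) has_derivative frechet_derivative F (at (p + v))) (at p)"
    using has_derivative_compose by (fastforce simp: o_def)
  then show ?thesis
    using inv by (simp add: frechet_derivative_at[symmetric])
qed

lemma periodic3_dir_deriv:
  assumes per: "periodic3 L F" and F: "F differentiable_on UNIV"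
  shows "periodic3 L (dir_deriv b F)"
proof -
  have "F (p + (L,0,0)) = F p" "F (p + (0,L,0)) = F p" "F (p + (0,0,L)) = F p" for p
    using per unfolding periodic3_def by (cases p; auto)+
  from this[THEN frechet_derivative_translation_invariant[OF F]] show ?thesis
    unfolding periodic3_def dir_deriv_def by (metis add_Pair add_0_right)
qed

lemma has_real_derivative_along_line:
  fixes F :: "'a::real_normed_vector \<Rightarrow> real"
  assumes F: "F differentiable_on UNIV"
  shows "((\<lambda>t. F (p + t *\<^sub>R v)) has_real_derivative frechet_derivative F (at (p + t *\<^sub>R v)) v) (at t)"
proof -
  have D: "(F has_derivative frechet_derivative F (at (p + t *\<^sub>R v))) (at (p + t *\<^sub>R v))"
    using F unfolding differentiable_on_def frechet_derivative_works by blast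
  have "((\<lambda>t. p + t *\<^sub>R v) has_derivative (\<lambda>s. s *\<^sub>R v)) (at t)"
    by (auto intro!: derivative_eq_intros)
  from has_derivative_compose[OF this D]
  have "((\<lambda>t. F (p + t *\<^sub>R v)) has_derivative
          (\<lambda>s. frechet_derivative F (at (p + t *\<^sub>R v)) (s *\<^sub>R v))) (at t)"
    by (simp add: o_def)
  then show ?thesis
    unfolding has_field_derivative_def
    using linear_cmul[OF has_derivative_linear[OF D]]
    by (simp add: mult.commute[of _ "frechet_derivative F (at (p + t *\<^sub>R v)) v"])
qed

lemma has_real_derivative_partial:
  fixes F :: "pt3 \<Rightarrow> real"
  assumes "F differentiable_on UNIV"
  shows "((\<lambda>t. F (t, y, z)) has_real_derivative dir_deriv (1,0,0) F (t, y, z)) (at t)"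
    and "((\<lambda>t. F (x, t, z)) has_real_derivative dir_deriv (0,1,0) F (x, t, z)) (at t)"
    and "((\<lambda>t. F (x, y, t)) has_real_derivative dir_deriv (0,0,1) F (x, y, t)) (at t)"
  using has_real_derivative_along_line[OF assms, where p = "(0,y,z)" and v = "(1,0,0)" and t = t]
    has_real_derivative_along_line[OF assms, where p = "(x,0,z)" and v = "(0,1,0)" and t = t]
    has_real_derivative_along_line[OF assms, where p = "(x,y,0)" and v = "(0,0,1)" and t = t]
  by (simp_all add: dir_deriv_def)

lemma Basis_pt3: "((1,0,0)::pt3) \<in> Basis" "((0,1,0)::pt3) \<in> Basis" "((0,0,1)::pt3) \<in> Basis"
  by (auto simp: Basis_prod_def zero_prod_def)

lemma integral_cis_by_parts:
  fixes g g' :: "real \<Rightarrow> real" and c w L :: real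
  assumes L: "L > 0" and w: "w \<noteq> 0" and per: "cis (w * L) = 1"
    and der: "\<And>t. (g has_real_derivative g' t) (at t)"
    and cont: "continuous_on UNIV g'" and gL: "g L = g 0"
  shows "integral {0..L} (\<lambda>t. complex_of_real (g t) * cis (c - w * t)) =
         integral {0..L} (\<lambda>t. complex_of_real (g' t) * cis (c - w * t)) / (\<i> * complex_of_real w)"
proof -
  define A where "A t = complex_of_real (g' t) * cis (c - w * t)" for t
  define B where "B t = complex_of_real (g t) * cis (c - w * t)" for t
  have "(B has_vector_derivative (A t - (\<i> * complex_of_real w) * B t)) (at t within {0..L})" for t
  proof -
    have "((\<lambda>t. c - w * t) has_derivative (\<lambda>s. - (w * s))) (at t)"
      by (auto intro!: derivative_eq_intros)
    from has_derivative_cis[OF this]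
    have "((\<lambda>t. cis (c - w * t)) has_vector_derivative (- (\<i> * complex_of_real w) * cis (c - w * t))) (at t)"
      unfolding has_vector_derivative_def by (simp add: fun_eq_iff algebra_simps scaleR_conv_of_real)
    from has_vector_derivative_mult[OF has_vector_derivative_of_real[OF der] this]
    show ?thesis
      unfolding A_def B_def by (auto simp: algebra_simps intro: has_vector_derivative_at_within)
  qed
  moreover have "B L = B 0"
  proof -
    have "cis (c - w * L) = cis c * cis (- (w * L))"
      by (simp add: cis_mult)
    then show ?thesis using per gL by (simp add: B_def flip: cis_inverse)
  qed
  ultimately have "((\<lambda>t. A t - (\<i> * complex_of_real w) * B t) has_integral 0) {0..L}"
    using fundamental_theorem_of_calculus[of 0 L B] L by auto
  moreover have "continuous_on UNIV g"
    using DERIV_isCont[OF der] by (simp add: continuous_at_imp_continuous_on)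
  then have "A integrable_on {0..L}" "B integrable_on {0..L}"
    unfolding A_def B_def
    by (auto intro!: integrable_continuous_interval continuous_intros continuous_on_subset[OF cont]
        elim: continuous_on_subset)
  ultimately have "integral {0..L} A = (\<i> * complex_of_real w) * integral {0..L} B"
    by (metis (no_types) eq_iff_diff_eq_0 integrable_on_mult_right integral_diff integral_mult_right
        integral_unique)
  then show ?thesis using w unfolding A_def B_def by (simp add: field_simps)
qed

lemma integral_cis_freq_by_parts:
  fixes g g' :: "real \<Rightarrow> real" and q L :: real and k :: int
  assumes L: "L > 0" and k: "k \<noteq> 0"
    and der: "\<And>t. (g has_real_derivative g' t) (at t)"
    and cont: "continuous_on UNIV g'" and gL: "g L = g 0"
  shows "integral {0..L} (\<lambda>t. complex_of_real (g t) * cis (- 2 * pi * (of_int k * t + q) / L)) =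
         integral {0..L} (\<lambda>t. complex_of_real (g' t) * cis (- 2 * pi * (of_int k * t + q) / L))
           / (\<i> * complex_of_real (2 * pi * of_int k / L))"
proof -
  have phase: "- 2 * pi * (of_int k * t + q) / L = (- 2 * pi * q / L) - (2 * pi * of_int k / L) * t" for t
    using L by (simp add: field_simps)
  have "2 * pi * of_int k / L \<noteq> 0" "cis (2 * pi * of_int k / L * L) = 1"
    using L k by simp_all
  from integral_cis_by_parts[OF L this der cont gL] show ?thesis
    unfolding phase .
qed

lemma integral_Omega_iterated:
  fixes H :: "pt3 \<Rightarrow> 'a::euclidean_space"
  assumes H: "continuous_on UNIV H"
  shows "integral (Omega L) H = integral {0..L} (\<lambda>x. integral {0..L} (\<lambda>y. integral {0..L} (\<lambda>z. H (x, y, z))))"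
proof -
  have "integral (Omega L) H = integral (cbox 0 L) (\<lambda>x. integral (cbox (0, 0) (L, L)) (\<lambda>yz. H (x, yz)))"
    unfolding Omega_def by (rule integral_prod_continuous) (rule continuous_on_subset[OF H], auto)
  also have "\<dots> = integral (cbox 0 L) (\<lambda>x. integral (cbox 0 L) (\<lambda>y. integral (cbox 0 L) (\<lambda>z. H (x, y, z))))"
  proof (rule integral_cong)
    fix x :: real
    have "continuous_on UNIV (\<lambda>yz::real\<times>real. H (x, yz))"
      by (intro continuous_on_compose2[OF H] continuous_intros) auto
    then show "integral (cbox (0, 0) (L, L)) (\<lambda>yz. H (x, yz)) =
      integral (cbox 0 L) (\<lambda>y. integral (cbox 0 L) (\<lambda>z. H (x, y, z)))"
      by (subst integral_prod_continuous) (auto intro: continuous_on_subset)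
  qed
  finally show ?thesis by (simp add: box_real)
qed

lemma integral_Omega_iterated_x_inner:
  fixes H :: "pt3 \<Rightarrow> 'a::euclidean_space"
  assumes H: "continuous_on UNIV H"
  shows "integral (Omega L) H = integral (cbox (0, 0) (L, L)) (\<lambda>yz. integral {0..L} (\<lambda>x. H (x, yz)))"
proof -
  have "integral (Omega L) H = integral (cbox 0 L) (\<lambda>x. integral (cbox (0, 0) (L, L)) (\<lambda>yz. H (x, yz)))"
    unfolding Omega_def by (rule integral_prod_continuous) (rule continuous_on_subset[OF H], auto)
  also have "\<dots> = integral (cbox (0, 0) (L, L)) (\<lambda>yz. integral (cbox 0 L) (\<lambda>x. H (x, yz)))"
    by (rule integral_swap_continuous) (use continuous_on_subset[OF H] in \<open>simp add: case_prod_beta'\<close>)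
  finally show ?thesis by (simp add: box_real)
qed

lemma integral_Omega_iterated_y_inner:
  fixes H :: "pt3 \<Rightarrow> 'a::euclidean_space"
  assumes H: "continuous_on UNIV H"
  shows "integral (Omega L) H = integral {0..L} (\<lambda>x. integral {0..L} (\<lambda>z. integral {0..L} (\<lambda>y. H (x, y, z))))"
  unfolding integral_Omega_iterated[OF H]
proof (rule integral_cong)
  fix x :: real
  have "continuous_on UNIV (\<lambda>yz. H (x, yz))"
    by (intro continuous_on_compose2[OF H] continuous_intros) auto
  moreover have "(\<lambda>(y, z). H (x, y, z)) = (\<lambda>yz. H (x, yz))"
    by auto
  ultimately have "continuous_on UNIV (\<lambda>(y, z). H (x, y, z))"
    by simp
  then show "integral {0..L} (\<lambda>y. integral {0..L} (\<lambda>z. H (x, y, z))) =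
      integral {0..L} (\<lambda>z. integral {0..L} (\<lambda>y. H (x, y, z)))"
    using integral_swap_continuous[of 0 0 L L "\<lambda>y z. H (x, y, z)"]
    by (auto simp: box_real intro: continuous_on_subset)
qed

section \<open>Decay of the Fourier coefficients\<close>

definition fourier_integral :: "real \<Rightarrow> (pt3 \<Rightarrow> real) \<Rightarrow> int \<Rightarrow> int \<Rightarrow> int \<Rightarrow> complex" where
  "fourier_integral L F k1 k2 k3 = integral (Omega L) (\<lambda>(x, y, z). complex_of_real (F (x, y, z)) *
     cis (- 2 * pi * (of_int k1 * x + of_int k2 * y + of_int k3 * z) / L))"

lemma fourier_coeff_eq_fourier_integral:
  "fourier_coeff L F (k1, k2, k3) = complex_of_real (1 / L ^ 3) * fourier_integral L F k1 k2 k3"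
  by (simp add: fourier_coeff_def fourier_integral_def)

lemma continuous_on_fourier_integrand:
  fixes G :: "pt3 \<Rightarrow> real"
  assumes "continuous_on UNIV G" and "L > 0"
  shows "continuous_on UNIV (\<lambda>(x, y, z). complex_of_real (G (x, y, z)) *
           cis (- 2 * pi * (of_int k1 * x + of_int k2 * y + of_int k3 * z) / L))"
  unfolding case_prod_beta'
  using assms(2) by (intro continuous_intros continuous_on_compose2[OF assms(1)]) auto

lemma fourier_integral_by_parts_x:
  assumes L: "L > 0" and F: "Ck (Suc 0) F" and per: "periodic3 L F" and k: "k1 \<noteq> 0"
  shows "fourier_integral L F k1 k2 k3 =
    fourier_integral L (dir_deriv (1,0,0) F) k1 k2 k3 / (\<i> * complex_of_real (2 * pi * of_int k1 / L))"
proof -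
  have cF: "continuous_on UNIV F" and cF': "continuous_on UNIV (dir_deriv (1,0,0) F)"
    using F Basis_pt3 by (auto simp: dir_deriv_def zero_prod_def intro: differentiable_imp_continuous_on)
  have "fourier_integral L F k1 k2 k3 = integral (cbox (0, 0) (L, L)) (\<lambda>(y, z). integral {0..L} (\<lambda>x.
     complex_of_real (F (x, y, z)) * cis (- 2 * pi * (of_int k1 * x + (of_int k2 * y + of_int k3 * z)) / L)))"
    unfolding fourier_integral_def integral_Omega_iterated_x_inner[OF continuous_on_fourier_integrand[OF cF L]]
    by (simp add: case_prod_beta' add.assoc)
  also have "\<dots> = integral (cbox (0, 0) (L, L)) (\<lambda>(y, z). integral {0..L} (\<lambda>x.
     complex_of_real (dir_deriv (1,0,0) F (x, y, z)) *
       cis (- 2 * pi * (of_int k1 * x + (of_int k2 * y + of_int k3 * z)) / L))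
      / (\<i> * complex_of_real (2 * pi * of_int k1 / L)))"
  proof (rule integral_cong, clarify)
    fix y z
    have "continuous_on UNIV (\<lambda>t. dir_deriv (1,0,0) F (t, y, z))"
      by (intro continuous_on_compose2[OF cF'] continuous_intros) auto
    moreover have "F (L, y, z) = F (0, y, z)"
      using per unfolding periodic3_def by (metis add_0)
    ultimately show "integral {0..L} (\<lambda>x. complex_of_real (F (x, y, z)) *
        cis (- 2 * pi * (of_int k1 * x + (of_int k2 * y + of_int k3 * z)) / L)) =
      integral {0..L} (\<lambda>x. complex_of_real (dir_deriv (1,0,0) F (x, y, z)) *
        cis (- 2 * pi * (of_int k1 * x + (of_int k2 * y + of_int k3 * z)) / L))
      / (\<i> * complex_of_real (2 * pi * of_int k1 / L))"
      using integral_cis_freq_by_parts[OF L k has_real_derivative_partial(1)[of F y z]] F by simp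
  qed
  also have "\<dots> = fourier_integral L (dir_deriv (1,0,0) F) k1 k2 k3 / (\<i> * complex_of_real (2 * pi * of_int k1 / L))"
    unfolding fourier_integral_def integral_Omega_iterated_x_inner[OF continuous_on_fourier_integrand[OF cF' L]]
    by (simp add: case_prod_beta' add.assoc)
  finally show ?thesis .
qed

lemma fourier_integral_by_parts_y:
  assumes L: "L > 0" and F: "Ck (Suc 0) F" and per: "periodic3 L F" and k: "k2 \<noteq> 0"
  shows "fourier_integral L F k1 k2 k3 =
    fourier_integral L (dir_deriv (0,1,0) F) k1 k2 k3 / (\<i> * complex_of_real (2 * pi * of_int k2 / L))"
proof -
  have cF: "continuous_on UNIV F" and cF': "continuous_on UNIV (dir_deriv (0,1,0) F)"
    using F Basis_pt3 by (auto simp: dir_deriv_def zero_prod_def intro: differentiable_imp_continuous_on)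
  have "fourier_integral L F k1 k2 k3 = integral {0..L} (\<lambda>x. integral {0..L} (\<lambda>z. integral {0..L} (\<lambda>y.
     complex_of_real (F (x, y, z)) * cis (- 2 * pi * (of_int k1 * x + of_int k2 * y + of_int k3 * z) / L))))"
    unfolding fourier_integral_def integral_Omega_iterated_y_inner[OF continuous_on_fourier_integrand[OF cF L]]
    by simp
  also have "\<dots> = integral {0..L} (\<lambda>x. integral {0..L} (\<lambda>z. integral {0..L} (\<lambda>y.
     complex_of_real (dir_deriv (0,1,0) F (x, y, z)) *
       cis (- 2 * pi * (of_int k1 * x + of_int k2 * y + of_int k3 * z) / L))
      / (\<i> * complex_of_real (2 * pi * of_int k2 / L))))"
  proof (intro integral_cong)
    fix x z
    have "continuous_on UNIV (\<lambda>t. dir_deriv (0,1,0) F (x, t, z))"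
      by (intro continuous_on_compose2[OF cF'] continuous_intros) auto
    moreover have "F (x, L, z) = F (x, 0, z)"
      using per unfolding periodic3_def by (metis add_0)
    ultimately show "integral {0..L} (\<lambda>y. complex_of_real (F (x, y, z)) *
        cis (- 2 * pi * (of_int k1 * x + of_int k2 * y + of_int k3 * z) / L)) =
      integral {0..L} (\<lambda>y. complex_of_real (dir_deriv (0,1,0) F (x, y, z)) *
        cis (- 2 * pi * (of_int k1 * x + of_int k2 * y + of_int k3 * z) / L))
      / (\<i> * complex_of_real (2 * pi * of_int k2 / L))"
      using integral_cis_freq_by_parts[OF L k has_real_derivative_partial(2)[of F x z],
          where q = "of_int k1 * x + of_int k3 * z"] F
      by (simp add: ac_simps)
  qed
  also have "\<dots> = fourier_integral L (dir_deriv (0,1,0) F) k1 k2 k3 / (\<i> * complex_of_real (2 * pi * of_int k2 / L))"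
    unfolding fourier_integral_def integral_Omega_iterated_y_inner[OF continuous_on_fourier_integrand[OF cF' L]]
    by simp
  finally show ?thesis .
qed

lemma fourier_integral_by_parts_z:
  assumes L: "L > 0" and F: "Ck (Suc 0) F" and per: "periodic3 L F" and k: "k3 \<noteq> 0"
  shows "fourier_integral L F k1 k2 k3 =
    fourier_integral L (dir_deriv (0,0,1) F) k1 k2 k3 / (\<i> * complex_of_real (2 * pi * of_int k3 / L))"
proof -
  have cF: "continuous_on UNIV F" and cF': "continuous_on UNIV (dir_deriv (0,0,1) F)"
    using F Basis_pt3 by (auto simp: dir_deriv_def zero_prod_def intro: differentiable_imp_continuous_on)
  have "fourier_integral L F k1 k2 k3 = integral {0..L} (\<lambda>x. integral {0..L} (\<lambda>y. integral {0..L} (\<lambda>z.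
     complex_of_real (F (x, y, z)) * cis (- 2 * pi * (of_int k1 * x + of_int k2 * y + of_int k3 * z) / L))))"
    unfolding fourier_integral_def integral_Omega_iterated[OF continuous_on_fourier_integrand[OF cF L]]
    by simp
  also have "\<dots> = integral {0..L} (\<lambda>x. integral {0..L} (\<lambda>y. integral {0..L} (\<lambda>z.
     complex_of_real (dir_deriv (0,0,1) F (x, y, z)) *
       cis (- 2 * pi * (of_int k1 * x + of_int k2 * y + of_int k3 * z) / L))
      / (\<i> * complex_of_real (2 * pi * of_int k3 / L))))"
  proof (intro integral_cong)
    fix x y
    have "continuous_on UNIV (\<lambda>t. dir_deriv (0,0,1) F (x, y, t))"
      by (intro continuous_on_compose2[OF cF'] continuous_intros) auto
    moreover have "F (x, y, L) = F (x, y, 0)"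
      using per unfolding periodic3_def by (metis add_0)
    ultimately show "integral {0..L} (\<lambda>z. complex_of_real (F (x, y, z)) *
        cis (- 2 * pi * (of_int k1 * x + of_int k2 * y + of_int k3 * z) / L)) =
      integral {0..L} (\<lambda>z. complex_of_real (dir_deriv (0,0,1) F (x, y, z)) *
        cis (- 2 * pi * (of_int k1 * x + of_int k2 * y + of_int k3 * z) / L))
      / (\<i> * complex_of_real (2 * pi * of_int k3 / L))"
      using integral_cis_freq_by_parts[OF L k has_real_derivative_partial(3)[of F x y],
          where q = "of_int k1 * x + of_int k2 * y"] F
      by (simp add: ac_simps)
  qed
  also have "\<dots> = fourier_integral L (dir_deriv (0,0,1) F) k1 k2 k3 / (\<i> * complex_of_real (2 * pi * of_int k3 / L))"
    unfolding fourier_integral_def integral_Omega_iterated[OF continuous_on_fourier_integrand[OF cF' L]]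
    by simp
  finally show ?thesis .
qed

lemma fourier_integral_by_parts_iter:
  assumes step: "\<And>G. Ck (Suc 0) G \<Longrightarrow> periodic3 L G \<Longrightarrow>
      fourier_integral L G k1 k2 k3 = fourier_integral L (dir_deriv b G) k1 k2 k3 / z"
    and b: "b \<in> Basis"
  shows "Ck j F \<Longrightarrow> periodic3 L F \<Longrightarrow>
    fourier_integral L F k1 k2 k3 = fourier_integral L ((dir_deriv b ^^ j) F) k1 k2 k3 / z ^ j"
proof (induction j arbitrary: F)
  case (Suc j)
  have "Ck (Suc 0) F"
    using Ck_add_imp_Ck[of j "Suc 0" F] Suc.prems by simp
  moreover have "Ck j (dir_deriv b F)" "periodic3 L (dir_deriv b F)"
    using Suc.prems b Ck_Suc_dir_deriv periodic3_dir_deriv by auto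
  ultimately show ?case
    using step Suc by (simp add: funpow_Suc_right del: funpow.simps)
qed simp

lemma fourier_integral_bounded:
  assumes L: "L > 0" and G: "continuous_on UNIV G"
  shows "\<exists>B\<ge>0. \<forall>k1 k2 k3. norm (fourier_integral L G k1 k2 k3) \<le> B"
proof -
  have "compact (G ` Omega L)"
    unfolding Omega_def by (intro compact_continuous_image continuous_on_subset[OF G]) auto
  then obtain M where M: "\<And>p. p \<in> Omega L \<Longrightarrow> \<bar>G p\<bar> \<le> M" and "M \<ge> 0"
    by (metis (no_types, opaque_lifting) abs_ge_zero bounded_iff compact_imp_bounded image_eqI
        real_norm_def dual_order.trans)
  have "norm (fourier_integral L G k1 k2 k3) \<le> M * Henstock_Kurzweil_Integration.content (Omega L)"
    for k1 k2 k3
    unfolding fourier_integral_def Omega_def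
  proof (rule has_integral_bound[OF \<open>M \<ge> 0\<close> integrable_integral])
    show "(\<lambda>(x, y, z). complex_of_real (G (x, y, z)) *
        cis (- 2 * pi * (of_int k1 * x + of_int k2 * y + of_int k3 * z) / L)) integrable_on cbox (0, 0, 0) (L, L, L)"
      by (rule integrable_continuous, rule continuous_on_subset[OF continuous_on_fourier_integrand[OF G L]]) auto
  qed (use M in \<open>auto simp: norm_mult Omega_def\<close>)
  then show ?thesis
    using \<open>M \<ge> 0\<close> by (metis content_pos_le mult_nonneg_nonneg)
qed

definition freq_norm :: "int \<times> int \<times> int \<Rightarrow> real" where
  "freq_norm k = (case k of (k1, k2, k3) \<Rightarrow> real_of_int (max 1 (max \<bar>k1\<bar> (max \<bar>k2\<bar> \<bar>k3\<bar>))))"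

lemma freq_norm_ge_1: "freq_norm k \<ge> 1"
  by (cases k) (simp add: freq_norm_def)

lemma abs_le_freq_norm:
  "\<bar>real_of_int k1\<bar> \<le> freq_norm (k1, k2, k3)" "\<bar>real_of_int k2\<bar> \<le> freq_norm (k1, k2, k3)"
  "\<bar>real_of_int k3\<bar> \<le> freq_norm (k1, k2, k3)"
  by (auto simp: freq_norm_def le_max_iff_disj simp flip: of_int_abs)

lemma fourier_integral_decay_dir:
  assumes L: "L > 0" and bound: "\<And>k1 k2 k3. norm (fourier_integral L G k1 k2 k3) \<le> B" and "B \<ge> 0"
    and eq: "k \<noteq> 0 \<Longrightarrow> fourier_integral L F k1 k2 k3 =
      fourier_integral L G k1 k2 k3 / (\<i> * complex_of_real (2 * pi * of_int k / L)) ^ 6"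
  shows "\<bar>real_of_int k\<bar> ^ 6 * norm (fourier_integral L F k1 k2 k3) \<le> B * (L / (2 * pi)) ^ 6"
proof (cases "k = 0")
  case False
  have "norm ((\<i> * complex_of_real (2 * pi * of_int k / L)) ^ 6) = \<bar>2 * pi * of_int k / L\<bar> ^ 6"
    by (simp only: norm_power norm_mult norm_ii norm_of_real mult_1)
  also have "\<dots> = (2 * pi / L) ^ 6 * \<bar>real_of_int k\<bar> ^ 6"
    using L by (simp add: abs_mult field_simps power_mult_distrib)
  finally have "norm ((\<i> * complex_of_real (2 * pi * of_int k / L)) ^ 6) =
      (2 * pi / L) ^ 6 * \<bar>real_of_int k\<bar> ^ 6" .
  then have "norm (fourier_integral L F k1 k2 k3) =
      norm (fourier_integral L G k1 k2 k3) / ((2 * pi / L) ^ 6 * \<bar>real_of_int k\<bar> ^ 6)"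
    using eq[OF False] by (simp only: norm_divide)
  then have "\<bar>real_of_int k\<bar> ^ 6 * norm (fourier_integral L F k1 k2 k3) =
      (L / (2 * pi)) ^ 6 * norm (fourier_integral L G k1 k2 k3)"
    using L False by (simp add: field_simps power_divide)
  also have "\<dots> \<le> B * (L / (2 * pi)) ^ 6"
    using bound L by (simp add: mult.commute mult_right_mono)
  finally show ?thesis .
qed (use \<open>B \<ge> 0\<close> L in simp)

(* In the direction of the largest frequency component, six integrations by parts gain
   freq_norm k ^ 6. *)
lemma fourier_integral_decay:
  assumes L: "L > 0" and Phi: "Ck 6 Phi" and per: "periodic3 L Phi"
  shows "\<exists>C\<ge>0. \<forall>k1 k2 k3. norm (fourier_integral L Phi k1 k2 k3) \<le> C / freq_norm (k1, k2, k3) ^ 6"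
proof -
  have Phi6: "Ck (6 + 0) Phi" using Phi by simp
  obtain B0 where B0: "B0 \<ge> 0" "\<And>k1 k2 k3. norm (fourier_integral L Phi k1 k2 k3) \<le> B0"
    using fourier_integral_bounded[OF L Ck_imp_continuous_on[OF Phi]] by blast
  have "\<exists>B\<ge>0. \<forall>k1 k2 k3. norm (fourier_integral L ((dir_deriv b ^^ 6) Phi) k1 k2 k3) \<le> B"
    if "b \<in> Basis" for b
    using fourier_integral_bounded[OF L Ck_imp_continuous_on[OF Ck_add_dir_deriv_iter[OF Phi6 that]]] .
  then obtain B1 B2 B3 where
    B1: "B1 \<ge> 0" "\<And>k1 k2 k3. norm (fourier_integral L ((dir_deriv (1,0,0) ^^ 6) Phi) k1 k2 k3) \<le> B1" and
    B2: "B2 \<ge> 0" "\<And>k1 k2 k3. norm (fourier_integral L ((dir_deriv (0,1,0) ^^ 6) Phi) k1 k2 k3) \<le> B2" and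
    B3: "B3 \<ge> 0" "\<And>k1 k2 k3. norm (fourier_integral L ((dir_deriv (0,0,1) ^^ 6) Phi) k1 k2 k3) \<le> B3"
    using Basis_pt3 by meson
  define c where "c = (L / (2 * pi)) ^ 6"
  define C where "C = max B0 (max (B1 * c) (max (B2 * c) (B3 * c)))"
  have "\<bar>real_of_int k1\<bar> ^ 6 * norm (fourier_integral L Phi k1 k2 k3) \<le> C"
    and "\<bar>real_of_int k2\<bar> ^ 6 * norm (fourier_integral L Phi k1 k2 k3) \<le> C"
    and "\<bar>real_of_int k3\<bar> ^ 6 * norm (fourier_integral L Phi k1 k2 k3) \<le> C"
    and "norm (fourier_integral L Phi k1 k2 k3) \<le> C" for k1 k2 k3
    using fourier_integral_decay_dir[OF L B1(2,1) fourier_integral_by_parts_iter[OF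
          fourier_integral_by_parts_x[OF L] Basis_pt3(1) Phi per], of k1 k2 k3]
      fourier_integral_decay_dir[OF L B2(2,1) fourier_integral_by_parts_iter[OF
          fourier_integral_by_parts_y[OF L] Basis_pt3(2) Phi per], of k2 k1 k3]
      fourier_integral_decay_dir[OF L B3(2,1) fourier_integral_by_parts_iter[OF
          fourier_integral_by_parts_z[OF L] Basis_pt3(3) Phi per], of k3 k1 k2]
      B0(2)[of k1 k2 k3]
    unfolding C_def c_def by (auto simp: le_max_iff_disj)
  moreover have "freq_norm (k1, k2, k3) = 1 \<or> freq_norm (k1, k2, k3) = \<bar>real_of_int k1\<bar> \<or>
      freq_norm (k1, k2, k3) = \<bar>real_of_int k2\<bar> \<or> freq_norm (k1, k2, k3) = \<bar>real_of_int k3\<bar>" for k1 k2 k3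
    unfolding freq_norm_def by (simp add: max_def)
  ultimately have "freq_norm (k1, k2, k3) ^ 6 * norm (fourier_integral L Phi k1 k2 k3) \<le> C" for k1 k2 k3
    by (metis mult_1 power_one)
  moreover have "C \<ge> 0" using B0 by (simp add: C_def)
  moreover have "freq_norm k ^ 6 > 0" for k
    using freq_norm_ge_1[of k] by simp
  ultimately show ?thesis
    by (auto simp: pos_le_divide_eq mult.commute intro!: exI[of _ C])
qed

lemma fourier_coeff_decay:
  assumes L: "L > 0" and Phi: "Ck 6 Phi" and per: "periodic3 L Phi"
  shows "\<exists>D\<ge>0. \<forall>k. norm (fourier_coeff L Phi k) \<le> D / freq_norm k ^ 6"
proof -
  obtain C where "C \<ge> 0"
    and C: "\<And>k1 k2 k3. norm (fourier_integral L Phi k1 k2 k3) \<le> C / freq_norm (k1, k2, k3) ^ 6"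
    using fourier_integral_decay[OF assms] by blast
  have "norm (fourier_coeff L Phi k) \<le> C / L ^ 3 / freq_norm k ^ 6" for k
    using C[of "fst k" "fst (snd k)" "snd (snd k)"] L
    by (cases k) (simp add: fourier_coeff_eq_fourier_integral norm_divide norm_power field_simps)
  then show ?thesis
    using \<open>C \<ge> 0\<close> L by (intro exI[of _ "C / L ^ 3"]) simp
qed

section \<open>Bounds for the Fourier projection\<close>

(* Splitting freq_norm k ^ -5 into three one-dimensional weights with exponent 5/3 > 1 makes the
   lattice sum converge. *)
definition freq_weight :: "int \<Rightarrow> real" where
  "freq_weight n = real_of_int (max 1 \<bar>n\<bar>) powr (-5/3)"

definition freq_weight_sum :: real where
  "freq_weight_sum = 1 + 2 * (\<Sum>n. real n powr (-5/3))"

lemma sum_freq_weight_le: "(\<Sum>n\<in>{-int K..int K}. freq_weight n) \<le> freq_weight_sum"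
proof -
  have "(\<Sum>n\<in>{-int K..int K}. freq_weight n) = 1 + 2 * (\<Sum>n\<in>{1..K}. real n powr (-5/3))"
  proof (induction K)
    case (Suc K)
    have "{-int (Suc K)..int (Suc K)} = insert (int K + 1) (insert (- int K - 1) {-int K..int K})"
      by auto
    moreover have "freq_weight (int K + 1) = real (Suc K) powr (-5/3)"
      "freq_weight (- int K - 1) = real (Suc K) powr (-5/3)"
      by (simp_all add: freq_weight_def add.commute)
    ultimately show ?case using Suc by simp
  qed (simp add: freq_weight_def)
  also have "\<dots> \<le> freq_weight_sum"
    unfolding freq_weight_sum_def
    by (intro add_left_mono mult_left_mono sum_le_suminf) (auto simp: summable_real_powr_iff)
  finally show ?thesis .
qed

lemma max_1_abs_le_freq_norm:
  "real_of_int (max 1 \<bar>k1\<bar>) \<le> freq_norm (k1, k2, k3)"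
  "real_of_int (max 1 \<bar>k2\<bar>) \<le> freq_norm (k1, k2, k3)"
  "real_of_int (max 1 \<bar>k3\<bar>) \<le> freq_norm (k1, k2, k3)"
  unfolding freq_norm_def of_int_le_iff by (auto simp: le_max_iff_disj)

lemma cube_powr_eq:
  fixes m :: real
  assumes m: "m > 0"
  shows "(m * m * m) powr (-5/3) = 1 / m ^ 5"
proof -
  have "m * m * m = m powr 3"
    using m by (simp add: powr_numeral power3_eq_cube)
  then have "(m * m * m) powr (-5/3) = m powr (3 * (-5/3))"
    by (simp only: powr_powr)
  also have "\<dots> = 1 / m powr 5"
    by (simp add: powr_minus_divide)
  finally show ?thesis
    using m by (simp add: powr_numeral)
qed

lemma inverse_freq_norm_pow5_le:
  "1 / freq_norm (k1, k2, k3) ^ 5 \<le> freq_weight k1 * freq_weight k2 * freq_weight k3"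
proof -
  let ?m = "freq_norm (k1, k2, k3)"
  have "real_of_int (max 1 \<bar>k1\<bar>) * real_of_int (max 1 \<bar>k2\<bar>) * real_of_int (max 1 \<bar>k3\<bar>) \<le> ?m * ?m * ?m"
    using max_1_abs_le_freq_norm freq_norm_ge_1[of "(k1, k2, k3)"] by (intro mult_mono) auto
  then have "(?m * ?m * ?m) powr (-5/3) \<le>
      (real_of_int (max 1 \<bar>k1\<bar>) * real_of_int (max 1 \<bar>k2\<bar>) * real_of_int (max 1 \<bar>k3\<bar>)) powr (-5/3)"
    by (intro powr_mono2') auto
  also have "\<dots> = freq_weight k1 * freq_weight k2 * freq_weight k3"
    by (simp add: freq_weight_def powr_mult)
  also have "(?m * ?m * ?m) powr (-5/3) = 1 / ?m ^ 5"
    using freq_norm_ge_1[of "(k1, k2, k3)"] by (intro cube_powr_eq) simp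
  finally show ?thesis .
qed

definition freq_box :: "nat \<Rightarrow> (int \<times> int \<times> int) set" where
  "freq_box K = {-int K..int K} \<times> {-int K..int K} \<times> {-int K..int K}"

lemma sum_inverse_freq_norm_pow5_le: "(\<Sum>k\<in>freq_box K. 1 / freq_norm k ^ 5) \<le> freq_weight_sum ^ 3"
proof -
  let ?I = "{-int K..int K}"
  have "(\<Sum>k\<in>freq_box K. 1 / freq_norm k ^ 5) \<le>
      (\<Sum>(k1, k2, k3)\<in>freq_box K. freq_weight k1 * freq_weight k2 * freq_weight k3)"
    by (intro sum_mono) (auto simp: inverse_freq_norm_pow5_le)
  also have "\<dots> = (\<Sum>k1\<in>?I. \<Sum>k2\<in>?I. \<Sum>k3\<in>?I. freq_weight k1 * freq_weight k2 * freq_weight k3)"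
    unfolding freq_box_def by (simp add: sum.cartesian_product)
  also have "\<dots> = (\<Sum>k1\<in>?I. freq_weight k1 * (\<Sum>k2\<in>?I. freq_weight k2) * (\<Sum>k3\<in>?I. freq_weight k3))"
    by (simp only: sum_distrib_left[symmetric] sum_distrib_right[symmetric])
  also have "\<dots> = (\<Sum>n\<in>?I. freq_weight n) ^ 3"
    by (simp add: sum_distrib_right power3_eq_cube)
  also have "\<dots> \<le> freq_weight_sum ^ 3"
    using sum_freq_weight_le by (intro power_mono) (auto intro: sum_nonneg simp: freq_weight_def)
  finally show ?thesis .
qed

definition fourier_phase :: "real \<Rightarrow> int \<times> int \<times> int \<Rightarrow> real \<Rightarrow> real \<Rightarrow> real \<Rightarrow> real" where
  "fourier_phase L k x y z =
    (case k of (k1, k2, k3) \<Rightarrow> 2 * pi * (of_int k1 * x + of_int k2 * y + of_int k3 * z) / L)"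

lemma fourier_proj_eq_sum:
  "fourier_proj L K f (x, y, z) = Re (\<Sum>k\<in>freq_box K. fourier_coeff L f k * cis (fourier_phase L k x y z))"
  unfolding fourier_proj_def freq_box_def fourier_phase_def
  by (auto intro!: arg_cong[where f = Re] sum.cong split: prod.splits)

lemma norm_cis_diff_le: "norm (cis a - cis b) \<le> \<bar>a - b\<bar>"
proof -
  define t where "t = a - b"
  have "(norm (cis t - 1))\<^sup>2 = (cos t - 1)\<^sup>2 + (sin t)\<^sup>2"
    by (simp add: cmod_power2)
  also have "\<dots> = 4 * (sin (t / 2))\<^sup>2"
    using sin_cos_squared_add[of t] cos_double_sin[of "t / 2"] by (simp add: power2_eq_square algebra_simps)
  also have "\<dots> \<le> 4 * (t / 2)\<^sup>2"
    using abs_sin_x_le_abs_x[of "t / 2", unfolded abs_le_square_iff] by simp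
  also have "\<dots> = t\<^sup>2"
    by (simp add: power_divide)
  finally have "norm (cis t - 1) \<le> \<bar>t\<bar>"
    by (metis abs_le_square_iff abs_norm_cancel)
  moreover have "cis a - cis b = cis b * (cis t - 1)"
    by (simp add: t_def right_diff_distrib cis_mult)
  ultimately show ?thesis
    by (simp add: t_def norm_mult)
qed

lemma norm_sum_decaying_coeffs_le:
  fixes c z :: "int \<times> int \<times> int \<Rightarrow> complex"
  assumes "D \<ge> 0" and coeff: "\<And>k. norm (c k) \<le> D / freq_norm k ^ 6"
    and "E \<ge> 0" and z: "\<And>k. norm (z k) \<le> E * freq_norm k"
  shows "norm (\<Sum>k\<in>freq_box K. c k * z k) \<le> E * D * freq_weight_sum ^ 3"
proof -
  have "norm (c k * z k) \<le> E * D * (1 / freq_norm k ^ 5)" for k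
  proof -
    have "norm (c k * z k) \<le> D / freq_norm k ^ 6 * (E * freq_norm k)"
      unfolding norm_mult using coeff z freq_norm_ge_1[of k] \<open>D \<ge> 0\<close> by (intro mult_mono) auto
    also have "\<dots> = E * D * (1 / freq_norm k ^ 5)"
      using freq_norm_ge_1[of k] by (simp add: field_simps power_eq_if)
    finally show ?thesis .
  qed
  then have "norm (\<Sum>k\<in>freq_box K. c k * z k) \<le> E * D * (\<Sum>k\<in>freq_box K. 1 / freq_norm k ^ 5)"
    by (simp add: sum_distrib_left order.trans[OF norm_sum sum_mono])
  also have "\<dots> \<le> E * D * freq_weight_sum ^ 3"
    using sum_inverse_freq_norm_pow5_le assms by (intro mult_left_mono) auto
  finally show ?thesis .
qed

lemma fourier_proj_bound:
  assumes "D \<ge> 0" and coeff: "\<And>k. norm (fourier_coeff L f k) \<le> D / freq_norm k ^ 6"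
  shows "\<bar>fourier_proj L K f (x, y, z)\<bar> \<le> D * freq_weight_sum ^ 3"
proof -
  have "\<bar>fourier_proj L K f (x, y, z)\<bar> \<le>
      norm (\<Sum>k\<in>freq_box K. fourier_coeff L f k * cis (fourier_phase L k x y z))"
    unfolding fourier_proj_eq_sum by (rule abs_Re_le_cmod)
  also have "\<dots> \<le> 1 * D * freq_weight_sum ^ 3"
    by (rule norm_sum_decaying_coeffs_le[OF assms]) (use freq_norm_ge_1 in auto)
  finally show ?thesis by simp
qed

lemma fourier_phase_diff_le:
  assumes L: "L > 0"
  shows "\<bar>fourier_phase L k (x + u) (y + v) (z + w) - fourier_phase L k x y z\<bar>
    \<le> (\<bar>u\<bar> + \<bar>v\<bar> + \<bar>w\<bar>) * (2 * pi / L) * freq_norm k"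
proof -
  obtain k1 k2 k3 where k: "k = (k1, k2, k3)" by (cases k)
  have "\<bar>of_int k1 * u + of_int k2 * v + of_int k3 * w\<bar> \<le>
      \<bar>of_int k1\<bar> * \<bar>u\<bar> + \<bar>of_int k2\<bar> * \<bar>v\<bar> + \<bar>of_int k3\<bar> * \<bar>w\<bar>"
    unfolding abs_mult[symmetric] by arith
  also have "\<dots> \<le> freq_norm k * (\<bar>u\<bar> + \<bar>v\<bar> + \<bar>w\<bar>)"
    using abs_le_freq_norm(1)[of k1 k2 k3] abs_le_freq_norm(2)[of k2 k1 k3] abs_le_freq_norm(3)[of k3 k1 k2]
    unfolding k distrib_left
    by (intro add_mono mult_right_mono) auto
  finally have "\<bar>of_int k1 * u + of_int k2 * v + of_int k3 * w\<bar> \<le> freq_norm k * (\<bar>u\<bar> + \<bar>v\<bar> + \<bar>w\<bar>)" .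
  moreover have "fourier_phase L k (x + u) (y + v) (z + w) - fourier_phase L k x y z =
      2 * pi / L * (of_int k1 * u + of_int k2 * v + of_int k3 * w)"
    using L by (simp add: k fourier_phase_def field_simps)
  ultimately have "\<bar>fourier_phase L k (x + u) (y + v) (z + w) - fourier_phase L k x y z\<bar>
      \<le> 2 * pi / L * (freq_norm k * (\<bar>u\<bar> + \<bar>v\<bar> + \<bar>w\<bar>))"
    using L by (simp add: abs_mult divide_right_mono)
  then show ?thesis
    by (simp only: mult_ac)
qed

lemma fourier_proj_lipschitz:
  assumes L: "L > 0" and "D \<ge> 0" and coeff: "\<And>k. norm (fourier_coeff L f k) \<le> D / freq_norm k ^ 6"
  shows "\<bar>fourier_proj L K f (x + u, y + v, z + w) - fourier_proj L K f (x, y, z)\<bar>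
     \<le> (\<bar>u\<bar> + \<bar>v\<bar> + \<bar>w\<bar>) * (2 * pi / L * D * freq_weight_sum ^ 3)"
proof -
  let ?z = "\<lambda>k. cis (fourier_phase L k (x + u) (y + v) (z + w)) - cis (fourier_phase L k x y z)"
  have "fourier_proj L K f (x + u, y + v, z + w) - fourier_proj L K f (x, y, z) =
      Re (\<Sum>k\<in>freq_box K. fourier_coeff L f k * ?z k)"
    by (simp add: fourier_proj_eq_sum right_diff_distrib sum_subtractf)
  also have "\<bar>\<dots>\<bar> \<le> (\<bar>u\<bar> + \<bar>v\<bar> + \<bar>w\<bar>) * (2 * pi / L) * D * freq_weight_sum ^ 3"
    using L by (intro order.trans[OF abs_Re_le_cmod norm_sum_decaying_coeffs_le[OF \<open>D \<ge> 0\<close> coeff]]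
        order.trans[OF norm_cis_diff_le fourier_phase_diff_le]) auto
  finally show ?thesis
    by (simp only: mult.assoc)
qed

lemma abs_grid_diff_eval_grid_le:
  assumes h: "h > 0"
    and lip: "\<And>x y z u v w. \<bar>f (x + u, y + v, z + w) - f (x, y, z)\<bar> \<le> (\<bar>u\<bar> + \<bar>v\<bar> + \<bar>w\<bar>) * C"
  shows "\<bar>Dx h (eval_grid h f) i j k\<bar> \<le> C" "\<bar>Dy h (eval_grid h f) i j k\<bar> \<le> C"
    "\<bar>Dz h (eval_grid h f) i j k\<bar> \<le> C"
proof -
  define x y z where "x = (of_int i - 1/2) * h" and "y = (of_int j - 1/2) * h" and "z = (of_int k - 1/2) * h"
  have "Dx h (eval_grid h f) i j k = (f (x + h, y + 0, z + 0) - f (x, y, z)) / h"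
    "Dy h (eval_grid h f) i j k = (f (x + 0, y + h, z + 0) - f (x, y, z)) / h"
    "Dz h (eval_grid h f) i j k = (f (x + 0, y + 0, z + h) - f (x, y, z)) / h"
    unfolding Dx_def Dy_def Dz_def eval_grid_def x_def y_def z_def by (simp_all add: algebra_simps)
  then show "\<bar>Dx h (eval_grid h f) i j k\<bar> \<le> C" "\<bar>Dy h (eval_grid h f) i j k\<bar> \<le> C"
    "\<bar>Dz h (eval_grid h f) i j k\<bar> \<le> C"
    using lip[of x h y 0 z 0] lip[of x 0 y h z 0] lip[of x 0 y 0 z h] h
    by (simp_all add: abs_divide divide_le_eq mult.commute)
qed

section \<open>Discrete orthogonality and conservation of mass\<close>

lemma sum_shift_periodic:
  fixes F :: "int \<Rightarrow> 'a::comm_monoid_add"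
  assumes per: "\<And>i. F (i + int N) = F i"
  shows "(\<Sum>i\<in>{1..int N}. F (i + 1)) = (\<Sum>i\<in>{1..int N}. F i)"
proof (cases "N = 0")
  case False
  have "(\<Sum>i\<in>{1..int N}. F (i + 1)) = (\<Sum>i\<in>insert (int N + 1) {2..int N}. F i)"
    by (rule sum.reindex_bij_witness[of _ "\<lambda>i. i - 1" "\<lambda>i. i + 1"]) (use False in auto)
  also have "\<dots> = F (1 + int N) + (\<Sum>i\<in>{2..int N}. F i)"
    by (simp add: add.commute)
  also have "\<dots> = (\<Sum>i\<in>insert 1 {2..int N}. F i)"
    using per[of 1] by simp
  also have "insert 1 {2..int N} = {1..int N}"
    using False by auto
  finally show ?thesis .
qed simp

lemma sum_shift_periodic':
  fixes F :: "int \<Rightarrow> 'a::comm_monoid_add"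
  assumes per: "\<And>i. F (i + int N) = F i"
  shows "(\<Sum>i\<in>{1..int N}. F (i - 1)) = (\<Sum>i\<in>{1..int N}. F i)"
  using sum_shift_periodic[of "\<lambda>i. F (i - 1)" N] per[of "_ - 1"] by (simp add: algebra_simps)

lemma cis_root_of_unity_ne_1:
  assumes "n \<noteq> 0" "\<bar>n\<bar> < int N"
  shows "cis (2 * pi * of_int n / real N) \<noteq> 1"
proof
  assume "cis (2 * pi * of_int n / real N) = 1"
  then have "cos (2 * pi * of_int n / real N) = 1"
    by (metis cis.sel(1) one_complex.sel(1))
  then obtain m :: int where "2 * pi * of_int n / real N = of_int m * 2 * pi"
    using cos_one_2pi_int by blast
  then have "n = m * int N"
    using assms by (simp add: field_simps) (metis of_int_eq_iff of_int_mult of_int_of_nat_eq)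
  then show False
    using assms by (cases "m = 0") (auto simp: abs_mult mult_le_cancel_right1)
qed

(* The shift i -> i + 1 permutes the terms but multiplies the sum by a root of unity w ~= 1. *)
lemma sum_cis_cell_centres:
  assumes n: "\<bar>n\<bar> < int N"
  shows "(\<Sum>i\<in>{1..int N}. cis (2 * pi * of_int n * (of_int i - 1/2) / real N)) = (if n = 0 then of_nat N else 0)"
proof (cases "n = 0")
  case False
  have N: "N > 0" using n by auto
  define F where "F i = cis (2 * pi * of_int n * (of_int i - 1/2) / real N)" for i :: int
  define w where "w = cis (2 * pi * of_int n / real N)"
  have "F (i + int N) = F i" for i
  proof -
    have "2 * pi * of_int n * (of_int (i + int N) - 1/2) / real N =
        2 * pi * of_int n * (of_int i - 1/2) / real N + 2 * pi * of_int n"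
      using N by (simp add: field_simps)
    then show ?thesis unfolding F_def by (simp add: cis_mult[symmetric])
  qed
  then have "(\<Sum>i\<in>{1..int N}. F (i + 1)) = (\<Sum>i\<in>{1..int N}. F i)"
    by (rule sum_shift_periodic)
  moreover have "F (i + 1) = w * F i" for i
  proof -
    have "2 * pi * of_int n * (of_int (i + 1) - 1/2) / real N =
        2 * pi * of_int n / real N + 2 * pi * of_int n * (of_int i - 1/2) / real N"
      using N by (simp add: field_simps)
    then show ?thesis unfolding F_def w_def by (simp add: cis_mult)
  qed
  ultimately have "(w - 1) * (\<Sum>i\<in>{1..int N}. F i) = 0"
    by (simp add: left_diff_distrib sum_distrib_left sum_subtractf)
  then show ?thesis
    using False cis_root_of_unity_ne_1[OF False n] unfolding F_def w_def by simp
qed simp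

lemma sum_cis_fourier_phase_grid:
  assumes k: "k \<in> freq_box K" and N: "N = 2 * K + 1" and h: "h = L / real N" and L: "L > 0"
  shows "(\<Sum>i\<in>{1..int N}. \<Sum>j\<in>{1..int N}. \<Sum>l\<in>{1..int N}.
      cis (fourier_phase L k ((of_int i - 1/2) * h) ((of_int j - 1/2) * h) ((of_int l - 1/2) * h)))
    = (if k = (0, 0, 0) then of_nat N ^ 3 else 0)"
proof -
  obtain a b c where abc: "k = (a, b, c)" by (cases k)
  have "real N > 0" using N by simp
  define E where "E n i = cis (2 * pi * of_int n * (of_int i - 1/2) / real N)" for n i :: int
  have "cis (fourier_phase L k ((of_int i - 1/2) * h) ((of_int j - 1/2) * h) ((of_int l - 1/2) * h)) =
      E a i * E b j * E c l" for i j l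
  proof -
    have "fourier_phase L k ((of_int i - 1/2) * h) ((of_int j - 1/2) * h) ((of_int l - 1/2) * h) =
       2 * pi * of_int a * (of_int i - 1/2) / real N + 2 * pi * of_int b * (of_int j - 1/2) / real N +
       2 * pi * of_int c * (of_int l - 1/2) / real N"
      using L \<open>real N > 0\<close> unfolding abc fourier_phase_def h by (simp add: field_simps)
    then show ?thesis unfolding E_def by (simp add: cis_mult)
  qed
  then have "(\<Sum>i\<in>{1..int N}. \<Sum>j\<in>{1..int N}. \<Sum>l\<in>{1..int N}.
      cis (fourier_phase L k ((of_int i - 1/2) * h) ((of_int j - 1/2) * h) ((of_int l - 1/2) * h)))
    = (\<Sum>i\<in>{1..int N}. \<Sum>j\<in>{1..int N}. E a i * E b j * (\<Sum>l\<in>{1..int N}. E c l))"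
    by (simp add: sum_distrib_left)
  also have "\<dots> = (\<Sum>i\<in>{1..int N}. E a i * (\<Sum>j\<in>{1..int N}. E b j) * (\<Sum>l\<in>{1..int N}. E c l))"
    by (simp only: sum_distrib_left[symmetric] sum_distrib_right[symmetric])
  also have "\<dots> = (\<Sum>i\<in>{1..int N}. E a i) * (\<Sum>j\<in>{1..int N}. E b j) * (\<Sum>l\<in>{1..int N}. E c l)"
    by (simp add: sum_distrib_right)
  finally have "(\<Sum>i\<in>{1..int N}. \<Sum>j\<in>{1..int N}. \<Sum>l\<in>{1..int N}.
      cis (fourier_phase L k ((of_int i - 1/2) * h) ((of_int j - 1/2) * h) ((of_int l - 1/2) * h)))
    = (\<Sum>i\<in>{1..int N}. E a i) * (\<Sum>j\<in>{1..int N}. E b j) * (\<Sum>l\<in>{1..int N}. E c l)" .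
  moreover have "\<bar>a\<bar> < int N" "\<bar>b\<bar> < int N" "\<bar>c\<bar> < int N"
    using k N by (auto simp: freq_box_def abc)
  ultimately show ?thesis
    unfolding E_def by (simp add: sum_cis_cell_centres abc power3_eq_cube)
qed

lemma fourier_integral_0:
  assumes "continuous_on UNIV Phi" and "L > 0"
  shows "fourier_integral L Phi 0 0 0 = complex_of_real (integral (Omega L) Phi)"
proof -
  have "Phi integrable_on Omega L"
    unfolding Omega_def by (rule integrable_continuous, rule continuous_on_subset[OF assms(1)]) auto
  then have "((\<lambda>p. complex_of_real (Phi p)) has_integral complex_of_real (integral (Omega L) Phi)) (Omega L)"
    by (intro has_integral_of_real) auto
  then show ?thesis
    unfolding fourier_integral_def by (simp add: case_prod_beta' integral_unique)
qed

lemma integral_eq_ip_fourier_proj: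
  assumes L: "L > 0" and Phi: "continuous_on UNIV Phi" and N: "N = 2 * K + 1" and h: "h = L / real N"
  shows "integral (Omega L) Phi = ip h N (eval_grid h (fourier_proj L K Phi)) (\<lambda>i j k. 1)"
proof -
  define T where "T k i j l = fourier_coeff L Phi k *
      cis (fourier_phase L k ((of_int i - 1/2) * h) ((of_int j - 1/2) * h) ((of_int l - 1/2) * h))"
    for k and i j l :: int
  have "ip h N (eval_grid h (fourier_proj L K Phi)) (\<lambda>i j k. 1) =
     h ^ 3 * Re (\<Sum>i\<in>{1..int N}. \<Sum>j\<in>{1..int N}. \<Sum>l\<in>{1..int N}. \<Sum>k\<in>freq_box K. T k i j l)"
    unfolding ip_def gsum_def eval_grid_def fourier_proj_eq_sum T_def by simp
  also have "(\<Sum>i\<in>{1..int N}. \<Sum>j\<in>{1..int N}. \<Sum>l\<in>{1..int N}. \<Sum>k\<in>freq_box K. T k i j l) =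
      (\<Sum>k\<in>freq_box K. \<Sum>i\<in>{1..int N}. \<Sum>j\<in>{1..int N}. \<Sum>l\<in>{1..int N}. T k i j l)"
    by (simp only: sum.swap[where B = "freq_box K"])
  also have "\<dots> = (\<Sum>k\<in>freq_box K. if k = (0, 0, 0) then fourier_coeff L Phi k * of_nat N ^ 3 else 0)"
    unfolding T_def sum_distrib_left[symmetric]
    by (intro sum.cong) (simp_all add: sum_cis_fourier_phase_grid[OF _ N h L])
  also have "\<dots> = fourier_coeff L Phi (0, 0, 0) * of_nat N ^ 3"
    by (simp add: freq_box_def)
  also have "h ^ 3 * Re \<dots> = integral (Omega L) Phi"
    using L N unfolding h by (simp add: fourier_coeff_eq_fourier_integral fourier_integral_0[OF Phi L]
        power_divide)
  finally show ?thesis ..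
qed

section \<open>Summation by parts on the periodic grid\<close>

lemma gsum_add: "gsum N (\<lambda>i j k. f i j k + g i j k) = gsum N f + gsum N g"
  by (simp add: gsum_def sum.distrib)

lemma gsum_diff: "gsum N (\<lambda>i j k. f i j k - g i j k) = gsum N f - gsum N g"
  by (simp add: gsum_def sum_subtractf)

lemma gsum_cmult: "gsum N (\<lambda>i j k. c * f i j k) = c * gsum N f"
  by (simp add: gsum_def sum_distrib_left)

lemma gsum_divide: "gsum N (\<lambda>i j k. f i j k / c) = gsum N f / c"
  by (simp add: gsum_def sum_divide_distrib)

lemma gsum_const: "gsum N (\<lambda>i j k. c) = real N ^ 3 * c"
  by (simp add: gsum_def power3_eq_cube)

lemma gsum_mono: "(\<And>i j k. f i j k \<le> g i j k) \<Longrightarrow> gsum N f \<le> gsum N g"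
  unfolding gsum_def by (intro sum_mono) auto

lemma grid_periodic_Dx: "grid_periodic N f \<Longrightarrow> grid_periodic N (Dx h f)"
  and grid_periodic_Dy: "grid_periodic N f \<Longrightarrow> grid_periodic N (Dy h f)"
  and grid_periodic_Dz: "grid_periodic N f \<Longrightarrow> grid_periodic N (Dz h f)"
  and grid_periodic_Mx: "grid_periodic N f \<Longrightarrow> grid_periodic N (Mx M f)"
  and grid_periodic_My: "grid_periodic N f \<Longrightarrow> grid_periodic N (My M f)"
  and grid_periodic_Mz: "grid_periodic N f \<Longrightarrow> grid_periodic N (Mz M f)"
  unfolding grid_periodic_def Dx_def Dy_def Dz_def Mx_def My_def Mz_def
  by (metis add.commute add.left_commute)+

lemma grid_periodic_mult:
  "grid_periodic N f \<Longrightarrow> grid_periodic N g \<Longrightarrow> grid_periodic N (\<lambda>i j k. f i j k * g i j k)"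
  and grid_periodic_diff:
  "grid_periodic N f \<Longrightarrow> grid_periodic N g \<Longrightarrow> grid_periodic N (\<lambda>i j k. f i j k - g i j k)"
  by (simp_all add: grid_periodic_def)

lemma gsum_shift:
  assumes "grid_periodic N G"
  shows "gsum N (\<lambda>i j k. G (i - 1) j k) = gsum N G"
    and "gsum N (\<lambda>i j k. G i (j - 1) k) = gsum N G"
    and "gsum N (\<lambda>i j k. G i j (k - 1)) = gsum N G"
  using assms unfolding gsum_def grid_periodic_def
  by (auto intro!: sum.cong sum_shift_periodic')

lemma summation_by_parts:
  assumes u: "grid_periodic N u" and "grid_periodic N A" "grid_periodic N B" "grid_periodic N C"
  shows "gsum N (\<lambda>i j k. u i j k * ((A i j k - A (i - 1) j k) / h + (B i j k - B i (j - 1) k) / h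
      + (C i j k - C i j (k - 1)) / h)) =
    - gsum N (\<lambda>i j k. Dx h u i j k * A i j k + Dy h u i j k * B i j k + Dz h u i j k * C i j k)"
proof -
  have "grid_periodic N (\<lambda>i j k. u (i + 1) j k * A i j k)"
    "grid_periodic N (\<lambda>i j k. u i (j + 1) k * B i j k)"
    "grid_periodic N (\<lambda>i j k. u i j (k + 1) * C i j k)"
    using assms unfolding grid_periodic_def by (metis add.commute add.left_commute)+
  from gsum_shift(1)[OF this(1)] gsum_shift(2)[OF this(2)] gsum_shift(3)[OF this(3)]
  have "gsum N (\<lambda>i j k. u i j k * A (i - 1) j k) = gsum N (\<lambda>i j k. u (i + 1) j k * A i j k)"
    "gsum N (\<lambda>i j k. u i j k * B i (j - 1) k) = gsum N (\<lambda>i j k. u i (j + 1) k * B i j k)"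
    "gsum N (\<lambda>i j k. u i j k * C i j (k - 1)) = gsum N (\<lambda>i j k. u i j (k + 1) * C i j k)"
    by simp_all
  then show ?thesis
    unfolding Dx_def Dy_def Dz_def
    by (simp add: algebra_simps diff_divide_distrib add_divide_distrib gsum_add gsum_diff gsum_divide)
qed

definition grad_ip :: "real \<Rightarrow> nat \<Rightarrow> grid \<Rightarrow> grid \<Rightarrow> real" where
  "grad_ip h N f g = h ^ 3 * gsum N (\<lambda>i j k.
      Dx h f i j k * Dx h g i j k + Dy h f i j k * Dy h g i j k + Dz h f i j k * Dz h g i j k)"

lemma ip_lap:
  assumes "h \<noteq> 0" and "grid_periodic N f" and "grid_periodic N g"
  shows "ip h N f (lap h g) = - grad_ip h N f g"
proof -
  have "lap h g i j k = (Dx h g i j k - Dx h g (i - 1) j k) / h + (Dy h g i j k - Dy h g i (j - 1) k) / h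
      + (Dz h g i j k - Dz h g i j (k - 1)) / h" for i j k
    using \<open>h \<noteq> 0\<close> unfolding lap_def Dx_def Dy_def Dz_def by (simp add: field_simps power2_eq_square)
  then show ?thesis
    unfolding ip_def grad_ip_def
    using summation_by_parts[of N f "Dx h g" "Dy h g" "Dz h g" h] assms
    by (simp add: grid_periodic_Dx grid_periodic_Dy grid_periodic_Dz)
qed

lemma ip_div_mob:
  assumes "grid_periodic N phi" and "grid_periodic N mu"
  shows "ip h N mu (div_mob h M phi mu) = - mob_grad_sq h N M phi mu"
proof -
  have "grid_periodic N (\<lambda>i j k. Mx M phi i j k * Dx h mu i j k)"
    "grid_periodic N (\<lambda>i j k. My M phi i j k * Dy h mu i j k)"
    "grid_periodic N (\<lambda>i j k. Mz M phi i j k * Dz h mu i j k)"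
    using assms by (simp_all add: grid_periodic_mult grid_periodic_Dx grid_periodic_Dy grid_periodic_Dz
        grid_periodic_Mx grid_periodic_My grid_periodic_Mz)
  from summation_by_parts[OF assms(2) this, of h] show ?thesis
    unfolding ip_def mob_grad_sq_def div_mob_def by (simp add: power2_eq_square mult_ac)
qed

section \<open>Energy estimates\<close>

definition flory_huggins :: "real \<Rightarrow> real \<Rightarrow> real" where
  "flory_huggins theta x = (1 + x) * ln (1 + x) + (1 - x) * ln (1 - x) - theta / 2 * x\<^sup>2"

lemma energy_eq:
  "energy eps theta h N f =
    h ^ 3 * gsum N (\<lambda>i j k. flory_huggins theta (f i j k)) + eps\<^sup>2 / 2 * grad_norm_sq h N f"
proof -
  have "gsum N (\<lambda>i j k. flory_huggins theta (f i j k)) =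
      gsum N (\<lambda>i j k. (1 + f i j k) * ln (1 + f i j k)) + gsum N (\<lambda>i j k. (1 - f i j k) * ln (1 - f i j k))
      - theta / 2 * gsum N (\<lambda>i j k. f i j k * f i j k)"
    unfolding flory_huggins_def by (simp only: gsum_add gsum_diff gsum_cmult power2_eq_square)
  then show ?thesis
    unfolding energy_def ip_def by (simp add: right_diff_distrib distrib_left mult_ac)
qed

lemma ln_diff_ge: "(p::real) > 0 \<Longrightarrow> q > 0 \<Longrightarrow> p * (ln p - ln q) \<ge> p - q"
  using ln_le_minus_one[of "q / p"] by (simp add: ln_div field_simps)

lemma flory_huggins_convex_splitting:
  assumes "\<bar>a\<bar> < 1" "\<bar>b\<bar> < 1" "theta \<ge> 0"
  shows "flory_huggins theta a - flory_huggins theta b \<le> (ln (1 + a) - ln (1 - a) - theta * b) * (a - b)"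
proof -
  have "(1 + b) * (ln (1 + b) - ln (1 + a)) \<ge> (1 + b) - (1 + a)"
    "(1 - b) * (ln (1 - b) - ln (1 - a)) \<ge> (1 - b) - (1 - a)"
    using assms by (intro ln_diff_ge; simp)+
  moreover have "0 \<le> theta / 2 * (a - b)\<^sup>2"
    using assms by simp
  ultimately show ?thesis
    unfolding flory_huggins_def by (simp add: power2_eq_square algebra_simps)
qed

lemma flory_huggins_lower_bound:
  assumes "\<bar>a\<bar> < 1" "theta \<ge> 0"
  shows "- theta / 2 \<le> flory_huggins theta a"
proof -
  have "flory_huggins 0 0 - flory_huggins 0 a \<le> 0"
    using flory_huggins_convex_splitting[of 0 a 0] assms by simp
  moreover have "theta / 2 * a\<^sup>2 \<le> theta / 2 * 1"
    using assms by (intro mult_left_mono) (auto simp: abs_square_le_1)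
  ultimately show ?thesis
    by (simp add: flory_huggins_def)
qed

(* No sign condition on u: Isabelle's ln is even with ln 0 = 0.  This is why the bound on the
   initial energy does not need the hypothesis |Phi| < 1. *)
lemma abs_mult_ln_le: "\<bar>(u::real) * ln u\<bar> \<le> u\<^sup>2 + 1"
proof (cases "u = 0")
  case False
  then have v: "\<bar>u\<bar> > 0" by simp
  have "ln \<bar>u\<bar> \<le> \<bar>u\<bar>" "- ln \<bar>u\<bar> \<le> 1 / \<bar>u\<bar>"
    using ln_le_minus_one[OF v] ln_le_minus_one[of "1 / \<bar>u\<bar>"] v by (simp_all add: ln_div)
  moreover have "0 < 1 / \<bar>u\<bar>"
    using v by simp
  ultimately have "\<bar>ln \<bar>u\<bar>\<bar> \<le> \<bar>u\<bar> + 1 / \<bar>u\<bar>"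
    unfolding abs_le_iff by linarith
  then have "\<bar>u\<bar> * \<bar>ln \<bar>u\<bar>\<bar> \<le> \<bar>u\<bar> * (\<bar>u\<bar> + 1 / \<bar>u\<bar>)"
    by (intro mult_left_mono) auto
  also have "\<dots> = u\<^sup>2 + 1"
    using v by (simp add: field_simps power2_eq_square)
  finally have "\<bar>u\<bar> * \<bar>ln \<bar>u\<bar>\<bar> \<le> u\<^sup>2 + 1" .
  moreover have "ln \<bar>u\<bar> = ln u"
    using ln_minus[of u] by (cases "u \<ge> 0") auto
  ultimately show ?thesis
    by (simp add: abs_mult)
qed simp

lemma flory_huggins_upper_bound:
  assumes "\<bar>a\<bar> \<le> A" "theta \<ge> 0"
  shows "flory_huggins theta a \<le> 2 * ((1 + A)\<^sup>2 + 1)"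
proof -
  have "(1 + a)\<^sup>2 \<le> (1 + A)\<^sup>2" "(1 - a)\<^sup>2 \<le> (1 + A)\<^sup>2"
    using assms by (simp_all add: abs_le_square_iff[symmetric])
  then have "(1 + a) * ln (1 + a) \<le> (1 + A)\<^sup>2 + 1" "(1 - a) * ln (1 - a) \<le> (1 + A)\<^sup>2 + 1"
    by (auto intro!: order_trans[OF abs_ge_self order_trans[OF abs_mult_ln_le]])
  then have "(1 + a) * ln (1 + a) + (1 - a) * ln (1 - a) \<le> 2 * ((1 + A)\<^sup>2 + 1)"
    using add_mono by fastforce
  moreover have "0 \<le> theta / 2 * a\<^sup>2"
    using assms by simp
  ultimately show ?thesis
    unfolding flory_huggins_def by (simp add: diff_le_eq order_trans)
qed

lemma grad_norm_sq_diff_le: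
  assumes "h \<ge> 0"
  shows "grad_norm_sq h N g - grad_norm_sq h N f \<le> 2 * grad_ip h N (\<lambda>i j k. g i j k - f i j k) g"
proof -
  have "Dx h (\<lambda>i j k. g i j k - f i j k) = (\<lambda>i j k. Dx h g i j k - Dx h f i j k)"
    "Dy h (\<lambda>i j k. g i j k - f i j k) = (\<lambda>i j k. Dy h g i j k - Dy h f i j k)"
    "Dz h (\<lambda>i j k. g i j k - f i j k) = (\<lambda>i j k. Dz h g i j k - Dz h f i j k)"
    by (simp_all add: Dx_def Dy_def Dz_def fun_eq_iff diff_divide_distrib)
  moreover have "a1\<^sup>2 + a2\<^sup>2 + a3\<^sup>2 - (b1\<^sup>2 + b2\<^sup>2 + b3\<^sup>2)
      \<le> 2 * ((a1 - b1) * a1) + 2 * ((a2 - b2) * a2) + 2 * ((a3 - b3) * a3)" for a1 a2 a3 b1 b2 b3 :: real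
    using zero_le_power2[of "a1 - b1"] zero_le_power2[of "a2 - b2"] zero_le_power2[of "a3 - b3"]
    by (simp add: power2_eq_square algebra_simps)
  ultimately have "gsum N (\<lambda>i j k. (Dx h g i j k)\<^sup>2 + (Dy h g i j k)\<^sup>2 + (Dz h g i j k)\<^sup>2)
      - gsum N (\<lambda>i j k. (Dx h f i j k)\<^sup>2 + (Dy h f i j k)\<^sup>2 + (Dz h f i j k)\<^sup>2)
    \<le> 2 * gsum N (\<lambda>i j k. Dx h (\<lambda>i j k. g i j k - f i j k) i j k * Dx h g i j k
      + Dy h (\<lambda>i j k. g i j k - f i j k) i j k * Dy h g i j k
      + Dz h (\<lambda>i j k. g i j k - f i j k) i j k * Dz h g i j k)"
    unfolding gsum_diff[symmetric] gsum_cmult[symmetric] by (intro gsum_mono) simp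
  then show ?thesis
    unfolding grad_norm_sq_def grad_ip_def right_diff_distrib[symmetric] mult.left_commute[of 2]
    using assms by (intro mult_left_mono) simp_all
qed

lemma energy_dissipation:
  fixes f f' mu :: grid
  assumes h: "h > 0" and dt: "dt > 0" and theta: "theta \<ge> 0"
    and per: "grid_periodic N f" "grid_periodic N f'" "grid_periodic N mu"
    and bd: "\<And>i j k. \<bar>f i j k\<bar> < 1" "\<And>i j k. \<bar>f' i j k\<bar> < 1"
    and scheme: "\<And>i j k. (f' i j k - f i j k) / dt = div_mob h M f mu i j k"
    and chem: "\<And>i j k. mu i j k = ln (1 + f' i j k) - ln (1 - f' i j k) - theta * f i j k
      - eps\<^sup>2 * lap h f' i j k"
  shows "energy eps theta h N f' + dt * mob_grad_sq h N M f mu \<le> energy eps theta h N f"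
proof -
  define d where "d i j k = f' i j k - f i j k" for i j k
  define r where "r i j k = ln (1 + f' i j k) - ln (1 - f' i j k) - theta * f i j k" for i j k
  have "energy eps theta h N f' - energy eps theta h N f =
      h ^ 3 * gsum N (\<lambda>i j k. flory_huggins theta (f' i j k) - flory_huggins theta (f i j k))
      + eps\<^sup>2 / 2 * (grad_norm_sq h N f' - grad_norm_sq h N f)"
    unfolding energy_eq gsum_diff by (simp add: field_simps)
  also have "\<dots> \<le> h ^ 3 * gsum N (\<lambda>i j k. r i j k * d i j k) + eps\<^sup>2 / 2 * (2 * grad_ip h N d f')"
    using flory_huggins_convex_splitting[OF bd(2) bd(1) theta] grad_norm_sq_diff_le[of h N f' f] h
    unfolding r_def d_def[abs_def]
    by (intro add_mono mult_left_mono gsum_mono) auto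
  also have "\<dots> = h ^ 3 * gsum N (\<lambda>i j k. r i j k * d i j k) - eps\<^sup>2 * ip h N d (lap h f')"
    using ip_lap[of h N d f'] per h grid_periodic_diff[OF per(2,1)] by (simp add: d_def[abs_def])
  also have "\<dots> = ip h N d mu"
    unfolding ip_def gsum_cmult[symmetric] gsum_diff[symmetric] right_diff_distrib[symmetric]
      mult.left_commute[of "eps\<^sup>2"]
    by (simp add: chem r_def algebra_simps)
  also have "\<dots> = dt * ip h N mu (div_mob h M f mu)"
    unfolding ip_def d_def
    using scheme dt by (simp add: gsum_cmult[symmetric] field_simps)
  also have "\<dots> = - dt * mob_grad_sq h N M f mu"
    using ip_div_mob[OF per(1,3)] by simp
  finally show ?thesis
    by simp
qed

lemma mob_grad_sq_nonneg:
  assumes mob: "\<forall>x\<in>{-1..1}. M x \<ge> M0" and "M0 > 0" and "h > 0"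
    and bd: "\<And>i j k. \<bar>f i j k\<bar> < 1"
  shows "mob_grad_sq h N M f mu \<ge> 0"
proof -
  have "M ((a + b) / 2) \<ge> 0" if "\<bar>a\<bar> < 1" "\<bar>b\<bar> < 1" for a b
  proof -
    have "(a + b) / 2 \<in> {-1..1}"
      using that by auto
    then have "M0 \<le> M ((a + b) / 2)"
      using mob by blast
    then show ?thesis
      using \<open>M0 > 0\<close> by linarith
  qed
  then have "Mx M f i j k \<ge> 0" "My M f i j k \<ge> 0" "Mz M f i j k \<ge> 0" for i j k
    unfolding Mx_def My_def Mz_def using bd by blast+
  then show ?thesis
    unfolding mob_grad_sq_def gsum_def using \<open>h > 0\<close> by (intro mult_nonneg_nonneg sum_nonneg) auto
qed

lemma scaled_gsum_le:
  assumes "h \<ge> 0" "h * real N = L" "\<And>i j k. f i j k \<le> c"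
  shows "h ^ 3 * gsum N f \<le> L ^ 3 * c"
proof -
  have "h ^ 3 * gsum N f \<le> h ^ 3 * gsum N (\<lambda>i j k. c)"
    using assms by (intro mult_left_mono gsum_mono) auto
  then show ?thesis
    using assms by (simp add: gsum_const power_mult_distrib[symmetric] mult.assoc[symmetric])
qed

lemma scaled_gsum_ge:
  assumes "h \<ge> 0" "h * real N = L" "\<And>i j k. c \<le> f i j k"
  shows "L ^ 3 * c \<le> h ^ 3 * gsum N f"
  using scaled_gsum_le[of h N L "\<lambda>i j k. - f i j k" "- c"] assms
  by (simp add: gsum_def sum_negf)

lemma energy_le_of_bounds:
  assumes "theta \<ge> 0" "h > 0" "h * real N = L"
    and A: "\<And>i j k. \<bar>f i j k\<bar> \<le> A"
    and B: "\<And>i j k. \<bar>Dx h f i j k\<bar> \<le> B" "\<And>i j k. \<bar>Dy h f i j k\<bar> \<le> B" "\<And>i j k. \<bar>Dz h f i j k\<bar> \<le> B"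
  shows "energy eps theta h N f \<le> L ^ 3 * (2 * ((1 + A)\<^sup>2 + 1) + eps\<^sup>2 / 2 * (3 * B\<^sup>2))"
proof -
  have "h ^ 3 * gsum N (\<lambda>i j k. flory_huggins theta (f i j k)) \<le> L ^ 3 * (2 * ((1 + A)\<^sup>2 + 1))"
    using assms by (intro scaled_gsum_le flory_huggins_upper_bound) auto
  moreover have "(Dx h f i j k)\<^sup>2 + (Dy h f i j k)\<^sup>2 + (Dz h f i j k)\<^sup>2 \<le> 3 * B\<^sup>2" for i j k
    using power_mono[OF B(1)[of i j k] abs_ge_zero, where n = 2]
      power_mono[OF B(2)[of i j k] abs_ge_zero, where n = 2]
      power_mono[OF B(3)[of i j k] abs_ge_zero, where n = 2] by simp
  then have "grad_norm_sq h N f \<le> L ^ 3 * (3 * B\<^sup>2)"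
    unfolding grad_norm_sq_def using assms by (intro scaled_gsum_le) auto
  then have "eps\<^sup>2 / 2 * grad_norm_sq h N f \<le> eps\<^sup>2 / 2 * (L ^ 3 * (3 * B\<^sup>2))"
    by (intro mult_left_mono) auto
  ultimately show ?thesis
    unfolding energy_eq by (simp add: distrib_left mult.left_commute)
qed

lemma grad_norm_sq_le_of_energy:
  assumes "eps > 0" "theta \<ge> 0" "h > 0" "h * real N = L"
    and bd: "\<And>i j k. \<bar>f i j k\<bar> < 1" and E: "energy eps theta h N f \<le> C"
  shows "sqrt (grad_norm_sq h N f) \<le> sqrt (2 * C + theta * L ^ 3) / eps"
proof -
  have "L ^ 3 * (- theta / 2) \<le> h ^ 3 * gsum N (\<lambda>i j k. flory_huggins theta (f i j k))"
    using assms by (intro scaled_gsum_ge flory_huggins_lower_bound) auto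
  then have "grad_norm_sq h N f \<le> (2 * C + theta * L ^ 3) / eps\<^sup>2"
    using E \<open>eps > 0\<close> unfolding energy_eq by (simp add: field_simps)
  then have "sqrt (grad_norm_sq h N f) \<le> sqrt ((2 * C + theta * L ^ 3) / eps\<^sup>2)"
    by (rule real_sqrt_le_mono)
  also have "\<dots> = sqrt (2 * C + theta * L ^ 3) / eps"
    using \<open>eps > 0\<close> by (simp add: real_sqrt_divide)
  finally show ?thesis .
qed

lemma scheme_energy_stable:
  assumes eps: "eps > 0" and theta: "theta \<ge> 0" and h: "h > 0" "h * real N = L"
    and mob: "\<forall>x\<in>{-1..1}. M x \<ge> M0" and "M0 > 0" and dt: "dt > 0" and init: "phi 0 = phi0"
    and per: "\<forall>m. grid_periodic N (phi m) \<and> grid_periodic N (mu m)"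
    and bd: "\<forall>m i j k. \<bar>phi m i j k\<bar> < 1"
    and scheme: "\<forall>m i j k. (phi (Suc m) i j k - phi m i j k) / dt = div_mob h M (phi m) (mu (Suc m)) i j k"
    and chem: "\<forall>m i j k. mu (Suc m) i j k = ln (1 + phi (Suc m) i j k) - ln (1 - phi (Suc m) i j k)
      - theta * phi m i j k - eps\<^sup>2 * lap h (phi (Suc m)) i j k"
    and E0: "energy eps theta h N phi0 \<le> C"
  shows "\<forall>m. energy eps theta h N (phi (Suc m)) + dt * mob_grad_sq h N M (phi m) (mu (Suc m))
      \<le> energy eps theta h N (phi m)"
    and "\<forall>m. energy eps theta h N (phi m) \<le> energy eps theta h N phi0"
    and "\<forall>m. sqrt (grad_norm_sq h N (phi m)) \<le> sqrt (2 * C + theta * L ^ 3) / eps"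
proof -
  have dissipation: "energy eps theta h N (phi (Suc m)) + dt * mob_grad_sq h N M (phi m) (mu (Suc m))
      \<le> energy eps theta h N (phi m)" for m
    using per bd scheme chem by (intro energy_dissipation[OF h(1) dt theta]) auto
  have nonneg: "0 \<le> mob_grad_sq h N M (phi m) (mu (Suc m))" for m
    using bd by (intro mob_grad_sq_nonneg[OF mob \<open>M0 > 0\<close> h(1)]) auto
  have "energy eps theta h N (phi (Suc m)) \<le> energy eps theta h N (phi m)" for m
    using dissipation[of m] mult_nonneg_nonneg[OF less_imp_le[OF dt] nonneg[of m]] by linarith
  then have "decseq (\<lambda>m. energy eps theta h N (phi m))"
    by (rule decseq_SucI)
  then have decay: "energy eps theta h N (phi m) \<le> energy eps theta h N phi0" for m
    using decseqD[of _ 0 m] init by fastforce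
  have "sqrt (grad_norm_sq h N (phi m)) \<le> sqrt (2 * C + theta * L ^ 3) / eps" for m
    using bd by (intro grad_norm_sq_le_of_energy[OF eps theta h _ order_trans[OF decay E0]]) auto
  with dissipation decay show
    "\<forall>m. energy eps theta h N (phi (Suc m)) + dt * mob_grad_sq h N M (phi m) (mu (Suc m))
      \<le> energy eps theta h N (phi m)"
    "\<forall>m. energy eps theta h N (phi m) \<le> energy eps theta h N phi0"
    "\<forall>m. sqrt (grad_norm_sq h N (phi m)) \<le> sqrt (2 * C + theta * L ^ 3) / eps"
    by blast+
qed

lemma energy_eval_fourier_proj_le:
  assumes L: "L > 0" and "theta \<ge> 0" and h: "h > 0" "h * real N = L" and "D \<ge> 0"
    and coeff: "\<And>k. norm (fourier_coeff L Phi k) \<le> D / freq_norm k ^ 6"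
  shows "energy eps theta h N (eval_grid h (fourier_proj L K Phi)) \<le> L ^ 3 *
    (2 * ((1 + D * freq_weight_sum ^ 3)\<^sup>2 + 1) + eps\<^sup>2 / 2 * (3 * (2 * pi / L * D * freq_weight_sum ^ 3)\<^sup>2))"
proof (rule energy_le_of_bounds)
  show "\<bar>eval_grid h (fourier_proj L K Phi) i j k\<bar> \<le> D * freq_weight_sum ^ 3" for i j k
    unfolding eval_grid_def by (rule fourier_proj_bound[OF \<open>D \<ge> 0\<close> coeff])
  note lip = abs_grid_diff_eval_grid_le[OF h(1) fourier_proj_lipschitz[OF L \<open>D \<ge> 0\<close> coeff]]
  show "\<bar>Dx h (eval_grid h (fourier_proj L K Phi)) i j k\<bar> \<le> 2 * pi / L * D * freq_weight_sum ^ 3"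
    "\<bar>Dy h (eval_grid h (fourier_proj L K Phi)) i j k\<bar> \<le> 2 * pi / L * D * freq_weight_sum ^ 3"
    "\<bar>Dz h (eval_grid h (fourier_proj L K Phi)) i j k\<bar> \<le> 2 * pi / L * D * freq_weight_sum ^ 3" for i j k
    by (rule lip)+
qed (use assms in auto)

lemma energy_eval_fourier_proj_bounded:
  assumes L: "L > 0" and "theta \<ge> 0" and Phi: "Ck 6 Phi" and per: "periodic3 L Phi"
  shows "\<exists>C > 0. \<forall>K h N. h > 0 \<longrightarrow> h * real N = L \<longrightarrow>
    energy eps theta h N (eval_grid h (fourier_proj L K Phi)) \<le> C"
proof -
  obtain D where "D \<ge> 0" and coeff: "\<And>k. norm (fourier_coeff L Phi k) \<le> D / freq_norm k ^ 6"
    using fourier_coeff_decay[OF L Phi per] by blast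
  define C where "C = 1 + L ^ 3 *
    (2 * ((1 + D * freq_weight_sum ^ 3)\<^sup>2 + 1) + eps\<^sup>2 / 2 * (3 * (2 * pi / L * D * freq_weight_sum ^ 3)\<^sup>2))"
  have "C > 0"
    unfolding C_def using L by (simp add: add_pos_nonneg)
  moreover have "energy eps theta h N (eval_grid h (fourier_proj L K Phi)) \<le> C"
    if "h > 0" "h * real N = L" for K h N
    using energy_eval_fourier_proj_le[OF L \<open>theta \<ge> 0\<close> that \<open>D \<ge> 0\<close> coeff,
        where eps = eps and K = K]
    by (simp add: C_def)
  ultimately show ?thesis
    by blast
qed

theorem theorem4p1:
  fixes eps theta0 L M0 :: real
    and M :: "real \<Rightarrow> real"
    and Phi :: "pt3 \<Rightarrow> real"
  assumes eps_pos: "eps > 0" and theta_pos: "theta0 > 0" and L_pos: "L > 0"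
    and M0_pos: "M0 > 0" and mob: "\<forall>x\<in>{-1..1}. M x \<ge> M0"
    and Phi_reg: "C6_per L Phi"
    and Phi_bd: "\<forall>x\<in>Omega L. \<bar>Phi x\<bar> < 1"
  shows "\<exists>C6 > 0. \<forall>K::nat.
    (let N = 2 * K + 1; h = L / real N; phi0 = eval_grid h (fourier_proj L K Phi) in
      integral (Omega L) Phi = ip h N phi0 (\<lambda>i j k. 1) \<and>
      energy eps theta0 h N phi0 \<le> C6 \<and>
      (\<forall>dt > 0. \<forall>phi mu :: nat \<Rightarrow> grid.
         (phi 0 = phi0 \<and>
          (\<forall>m. grid_periodic N (phi m) \<and> grid_periodic N (mu m)) \<and>
          (\<forall>m i j k. \<bar>phi m i j k\<bar> < 1) \<and>
          (\<forall>m i j k. (phi (Suc m) i j k - phi m i j k) / dt =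
                       div_mob h M (phi m) (mu (Suc m)) i j k) \<and>
          (\<forall>m i j k. mu (Suc m) i j k =
                       ln (1 + phi (Suc m) i j k) - ln (1 - phi (Suc m) i j k)
                       - theta0 * phi m i j k - eps\<^sup>2 * lap h (phi (Suc m)) i j k))
         \<longrightarrow>
         (\<forall>m. energy eps theta0 h N (phi (Suc m)) +
                 dt * mob_grad_sq h N M (phi m) (mu (Suc m))
               \<le> energy eps theta0 h N (phi m)) \<and>
         (\<forall>m. energy eps theta0 h N (phi m) \<le> energy eps theta0 h N phi0) \<and>
         (\<forall>m. sqrt (grad_norm_sq h N (phi m)) \<le> sqrt (2 * C6 + theta0 * L ^ 3) / eps)))"
proof -
  from Phi_reg have per: "periodic3 L Phi" and Phi: "Ck 6 Phi"
    by (auto simp: C6_per_def)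
  obtain C6 where "C6 > 0" and E0: "\<And>K h N. h > 0 \<Longrightarrow> h * real N = L \<Longrightarrow>
      energy eps theta0 h N (eval_grid h (fourier_proj L K Phi)) \<le> C6"
    using energy_eval_fourier_proj_bounded[OF L_pos less_imp_le[OF theta_pos] Phi per] by blast
  have h: "L / real (2 * K + 1) > 0" "L / real (2 * K + 1) * real (2 * K + 1) = L" for K
    using L_pos by auto
  note stable = scheme_energy_stable[OF eps_pos less_imp_le[OF theta_pos] h mob M0_pos, where C = C6]
  show ?thesis
    unfolding Let_def
    apply (intro exI[of _ C6] conjI allI impI; (elim conjE)?)
    subgoal by (rule \<open>C6 > 0\<close>)
    subgoal by (rule integral_eq_ip_fourier_proj[OF L_pos Ck_imp_continuous_on[OF Phi]]) simp_all
    subgoal by (rule E0[OF h])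
    subgoal by (rule stable(1)[THEN spec]) (assumption | rule E0[OF h])+
    subgoal by (rule stable(2)[THEN spec]) (assumption | rule E0[OF h])+
    subgoal by (rule stable(3)[THEN spec]) (assumption | rule E0[OF h])+
    done
qed

end
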